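(* Let $\mathbf p$ be a critical reproduction law whose tail satisfies $\bar F(n)=n^{-\alpha}\ell(n)$ for $n\ge1$, with $\ell$ slowly varying and $\alpha>2$; let $\sigma^2$ be its (finite) variance and $\varphi$ an asymptotic inverse of $\bar F$ ($\bar F(\varphi(\varepsilon))\sim\varepsilon$ as $\varepsilon\to0+$). Let $f:\mathbb{R}_+\to\mathbb{R}_+$ be continuous with $f\equiv0$ on some neighbourhood of $0$, and let $a\ge0$. For $k\ge1$ set $$\bar{\mathcal L}_k=1-\mathbb{E}\Big(\exp\Big(-ak^{-2}T_1-\sum_{i=1}^{T_1}f\big(X_i/\varphi(k^{-2})\big)\Big)\Big).$$ Then $$\lim_{k\to\infty}k\,\bar{\mathcal L}_k=\frac{\sqrt2}{\sigma}\Big(a+\alpha\int_0^\infty\big(1-e^{-f(x)}\big)x^{-\alpha-1}\,\mathrm dx\Big)^{1/2}.$$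
   Context: $\mathbf p=(p(n))_{n\in\mathbb{N}}$ is a probability measure on the nonnegative integers with $\sum_n np(n)=1$, $\mathbf p\ne\delta_1$; $\bar F(n)=\sum_{i>n}p(i)$, $\sigma^2=\sum_nn^2p(n)-1$. Consider a Galton–Watson process with reproduction law $\mathbf p$ started from a single ancestor; $T_1$ is its total population size (ancestor included) and $X_1,\dots,X_{T_1}$ are the numbers of children of its individuals, enumerated in some arbitrary order. *)

theory Defs
  imports "HOL-Analysis.Analysis"
begin

text \<open>Finite ordered (plane) rooted trees: the genealogical tree of a Galton--Watson
  process; each node carries the list of its children.\<close>
datatype ptree = Node "ptree list"

text \<open>Probability that the GW tree with reproduction law p equals the given plane tree.\<close>
fun gw_weight :: "(nat \<Rightarrow> real) \<Rightarrow> ptree \<Rightarrow> real" where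
  "gw_weight p (Node ts) = p (length ts) * prod_list (map (gw_weight p) ts)"

fun tsize :: "ptree \<Rightarrow> nat" where
  "tsize (Node ts) = 1 + sum_list (map tsize ts)"

fun node_sum :: "(nat \<Rightarrow> real) \<Rightarrow> ptree \<Rightarrow> real" where
  "node_sum g (Node ts) = g (length ts) + sum_list (map (node_sum g) ts)"

definition Fbar :: "(nat \<Rightarrow> real) \<Rightarrow> real \<Rightarrow> real" where
  "Fbar p x = (\<Sum>i. if real i > x then p i else 0)"

definition slowly_varying :: "(real \<Rightarrow> real) \<Rightarrow> bool" where
  "slowly_varying l \<longleftrightarrow> l \<in> borel_measurable borel \<and> (\<forall>\<^sub>F x in at_top. l x > 0) \<and>
     (\<forall>lam>0. ((\<lambda>x. l (lam * x) / l x) \<longlongrightarrow> 1) at_top)"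

definition gw_sigma :: "(nat \<Rightarrow> real) \<Rightarrow> real" where
  "gw_sigma p = sqrt ((\<Sum>n. real n ^ 2 * p n) - 1)"

text \<open>\<open>1 - E(exp(-a k^{-2} T_1 - \<Sum>_{i\<le>T_1} f(X_i/\<phi>(k^{-2}))))\<close>, the expectation over the
  (a.s. finite) GW tree written as a sum over all finite plane trees.\<close>
definition Lbar :: "(nat \<Rightarrow> real) \<Rightarrow> real \<Rightarrow> (real \<Rightarrow> real) \<Rightarrow> (real \<Rightarrow> real) \<Rightarrow> nat \<Rightarrow> real" where
  "Lbar p a f \<phi> k = 1 - (\<Sum>\<^sub>\<infinity>t. gw_weight p t *
      exp (- a / (real k)^2 * real (tsize t)
           - node_sum (\<lambda>n. f (real n / \<phi> (1 / (real k)^2))) t))"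

end

theory Submission
  imports Defs "HOL-Real_Asymp.Real_Asymp"
begin

text \<open>Write \<open>u k = E exp (- a k\<^sup>-\<^sup>2 T\<^sub>1 - \<Sum>\<^sub>i f (X\<^sub>i / \<phi>\<^sub>k))\<close> with
  \<open>\<phi>\<^sub>k = \<phi> (k\<^sup>-\<^sup>2)\<close>, so that the quantity of interest is \<open>1 - u k\<close>. Splitting the tree at its root
  gives the fixpoint equation \<open>u k = \<Sum>\<^sub>n p n exp (- a k\<^sup>-\<^sup>2 - f (n / \<phi>\<^sub>k)) u k ^ n\<close>. With the
  generating function \<open>G\<close> written as \<open>G (1 - x) - (1 - x) = x\<^sup>2 R x\<close>, where \<open>R 0 = \<sigma>\<^sup>2 / 2\<close>, it
  becomes
  \<open>(k (1 - u k))\<^sup>2 R (1 - u k) = k\<^sup>2 (exp (a k\<^sup>-\<^sup>2) - 1) u k + k\<^sup>2 \<Sum>\<^sub>n p n (1 - exp (- f (n / \<phi>\<^sub>k))) u k ^ n\<close>.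
  The first term tends to \<open>a\<close>. Regular variation gives \<open>k\<^sup>2 F (\<phi>\<^sub>k y) \<rightarrow> y powr -\<alpha>\<close>, so
  approximating \<open>1 - exp (- f)\<close> by step functions, \<open>k\<^sup>2 \<Sum>\<^sub>n p n (1 - exp (- f (n / \<phi>\<^sub>k)))\<close> tends to
  \<open>\<alpha> \<integral> (1 - exp (- f x)) x powr (-\<alpha> - 1) dx\<close>. The factors \<open>u k ^ n\<close> do not matter in the limit,
  because \<open>1 - u k = O (1 / k)\<close> (from the equation and \<open>R \<ge> c > 0\<close>) while \<open>\<phi>\<^sub>k = o (k)\<close> (finite
  variance). Hence \<open>R (1 - u k) \<rightarrow> \<sigma>\<^sup>2 / 2\<close> and \<open>k (1 - u k)\<close> converges to the claimed limit.\<close>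

section \<open>Infinite sums in \<open>ennreal\<close>\<close>

lemma infsum_cmult_right_ennreal:
  fixes f :: "'a \<Rightarrow> ennreal"
  shows "infsum (\<lambda>x. c * f x) A = c * infsum f A"
proof -
  have "infsum (\<lambda>x. c * f x) A = (SUP F\<in>{F. finite F \<and> F \<subseteq> A}. c * sum f F)"
    by (subst nonneg_infsum_complete) (simp_all add: sum_distrib_left)
  also have "\<dots> = c * infsum f A"
    by (subst nonneg_infsum_complete) (simp_all add: SUP_mult_left_ennreal)
  finally show ?thesis .
qed

lemma sum_infsum_eq_infsum_Sigma_ennreal:
  fixes f :: "'a \<times> 'b \<Rightarrow> ennreal"
  assumes "finite X"
  shows "(\<Sum>x\<in>X. infsum (\<lambda>y. f (x, y)) (B x)) = infsum f (Sigma X B)"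
  using assms
proof (induction X rule: finite_induct)
  case (insert x X)
  have "inj_on (Pair x) (B x)" by (auto simp: inj_on_def)
  then have slice: "infsum (\<lambda>y. f (x, y)) (B x) = infsum f (Pair x ` B x)"
    by (simp add: infsum_reindex o_def)
  have "Sigma (insert x X) B = Pair x ` B x \<union> Sigma X B"
    and "Pair x ` B x \<inter> Sigma X B = {}" using insert.hyps by auto
  then have "infsum f (Sigma (insert x X) B) = infsum f (Pair x ` B x) + infsum f (Sigma X B)"
    by (simp add: infsum_Un_disjoint nonneg_summable_on_complete)
  then show ?case using insert slice by simp
qed simp

lemma infsum_Sigma_ennreal:
  fixes f :: "'a \<times> 'b \<Rightarrow> ennreal"
  shows "infsum f (Sigma A B) = infsum (\<lambda>x. infsum (\<lambda>y. f (x, y)) (B x)) A"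
proof (rule antisym)
  show "infsum (\<lambda>x. infsum (\<lambda>y. f (x, y)) (B x)) A \<le> infsum f (Sigma A B)"
  proof (subst nonneg_infsum_complete, simp, rule SUP_least)
    fix X assume "X \<in> {F. finite F \<and> F \<subseteq> A}"
    then have X: "finite X" "X \<subseteq> A" by auto
    then have "(\<Sum>x\<in>X. infsum (\<lambda>y. f (x, y)) (B x)) = infsum f (Sigma X B)"
      by (simp add: sum_infsum_eq_infsum_Sigma_ennreal)
    also have "\<dots> \<le> infsum f (Sigma A B)"
      using X by (intro infsum_mono_neutral) (auto simp: nonneg_summable_on_complete)
    finally show "(\<Sum>x\<in>X. infsum (\<lambda>y. f (x, y)) (B x)) \<le> infsum f (Sigma A B)" .
  qed
  show "infsum f (Sigma A B) \<le> infsum (\<lambda>x. infsum (\<lambda>y. f (x, y)) (B x)) A"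
  proof (subst nonneg_infsum_complete, simp, rule SUP_least)
    fix F assume "F \<in> {F. finite F \<and> F \<subseteq> Sigma A B}"
    then have F: "finite F" "F \<subseteq> Sigma A B" by auto
    have "sum f F = infsum f F" using F by simp
    also have "\<dots> \<le> infsum f (Sigma (fst ` F) B)"
      using F by (intro infsum_mono_neutral) (force simp: nonneg_summable_on_complete)+
    also have "\<dots> = infsum (\<lambda>x. infsum (\<lambda>y. f (x, y)) (B x)) (fst ` F)"
      using F by (simp add: sum_infsum_eq_infsum_Sigma_ennreal)
    also have "\<dots> \<le> infsum (\<lambda>x. infsum (\<lambda>y. f (x, y)) (B x)) A"
      using F by (intro infsum_mono_neutral) (auto simp: nonneg_summable_on_complete)
    finally show "sum f F \<le> infsum (\<lambda>x. infsum (\<lambda>y. f (x, y)) (B x)) A" .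
  qed
qed

lemma infsum_ennreal:
  fixes w :: "'a \<Rightarrow> real"
  assumes "w summable_on A" "\<And>x. x \<in> A \<Longrightarrow> w x \<ge> 0"
  shows "infsum (\<lambda>x. ennreal (w x)) A = ennreal (infsum w A)"
proof -
  have "ennreal (infsum w A) = (SUP F\<in>{F. finite F \<and> F \<subseteq> A}. ennreal (sum w F))"
    using assms by (rule infsum_nonneg_is_SUPREMUM_ennreal)
  also have "\<dots> = infsum (\<lambda>x. ennreal (w x)) A"
    using assms by (subst nonneg_infsum_complete) (auto intro!: SUP_cong simp: subset_iff sum_ennreal)
  finally show ?thesis ..
qed

lemma infsum_ennreal_eq_suminf:
  fixes q :: "nat \<Rightarrow> real"
  assumes "summable q" "\<And>n. q n \<ge> 0"
  shows "infsum (\<lambda>n. ennreal (q n)) UNIV = ennreal (suminf q)"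
proof -
  have "(q has_sum suminf q) UNIV"
    using assms by (intro sums_nonneg_imp_has_sum) (simp_all add: summable_sums)
  then show ?thesis
    using assms by (simp add: infsum_ennreal has_sum_imp_summable infsumI)
qed

lemma nonneg_summable_on_if_infsum_ennreal_bounded:
  fixes w :: "'a \<Rightarrow> real"
  assumes nonneg: "\<And>x. x \<in> A \<Longrightarrow> w x \<ge> 0"
    and bounded: "infsum (\<lambda>x. ennreal (w x)) A \<le> ennreal b"
  shows "w summable_on A"
proof (rule nonneg_bdd_above_summable_on)
  show "bdd_above (sum w ` {F. F \<subseteq> A \<and> finite F})"
  proof (rule bdd_aboveI)
    fix y assume "y \<in> sum w ` {F. F \<subseteq> A \<and> finite F}"
    then obtain F where F: "F \<subseteq> A" "finite F" and y: "y = sum w F" by auto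
    have "ennreal (sum w F) = infsum (\<lambda>x. ennreal (w x)) F"
      using F nonneg by (simp add: subset_iff sum_ennreal)
    also have "\<dots> \<le> infsum (\<lambda>x. ennreal (w x)) A"
      using F by (intro infsum_mono_neutral) (auto simp: nonneg_summable_on_complete)
    also have "\<dots> \<le> ennreal b" by (rule bounded)
    finally show "y \<le> max b 0"
      using y by (metis ennreal_le_iff2 max.coboundedI1 max.coboundedI2 order.refl)
  qed
qed (use nonneg in auto)

lemma ennreal_prod_list: "(\<And>x. x \<in> set xs \<Longrightarrow> x \<ge> 0) \<Longrightarrow> ennreal (prod_list xs) = prod_list (map ennreal xs)"
  by (induction xs) (auto simp: ennreal_mult prod_list_nonneg)

section \<open>Multiplicative weights on plane trees\<close>

definition lists_length :: "'a set \<Rightarrow> nat \<Rightarrow> 'a list set" where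
  "lists_length A n = {xs. length xs = n \<and> set xs \<subseteq> A}"

lemma lists_length_0: "lists_length A 0 = {[]}"
  by (auto simp: lists_length_def)

lemma lists_length_Suc: "lists_length A (Suc n) = case_prod Cons ` (A \<times> lists_length A n)"
  by (auto simp: lists_length_def length_Suc_conv image_iff)

lemma lists_eq_image_Sigma_lists_length: "lists A = snd ` (SIGMA n:UNIV. lists_length A n)"
  by (auto simp: lists_length_def image_iff in_lists_conv_set)

lemma infsum_prod_list_lists_length:
  fixes V :: "'a \<Rightarrow> ennreal"
  shows "infsum (\<lambda>xs. prod_list (map V xs)) (lists_length A n) = infsum V A ^ n"
proof (induction n)
  case (Suc n)
  have "inj_on (case_prod Cons) (A \<times> lists_length A n)"
    by (auto simp: inj_on_def)
  then have "infsum (\<lambda>xs. prod_list (map V xs)) (lists_length A (Suc n))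
      = infsum (\<lambda>(x, xs). V x * prod_list (map V xs)) (A \<times> lists_length A n)"
    unfolding lists_length_Suc by (simp add: infsum_reindex o_def case_prod_unfold)
  also have "\<dots> = infsum (\<lambda>x. infsum V A ^ n * V x) A"
    by (simp add: infsum_Sigma_ennreal infsum_cmult_right_ennreal Suc mult.commute)
  also have "\<dots> = infsum V A ^ n * infsum V A"
    by (rule infsum_cmult_right_ennreal)
  finally show ?case by (simp add: mult.commute)
qed (simp add: lists_length_0)

lemma infsum_Node_lists:
  fixes V :: "ptree \<Rightarrow> ennreal" and Q :: "nat \<Rightarrow> ennreal"
  assumes V: "\<And>ts. V (Node ts) = Q (length ts) * prod_list (map V ts)"
  shows "infsum V (Node ` lists A) = infsum (\<lambda>n. Q n * infsum V A ^ n) UNIV"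
proof -
  have "inj_on Node (lists A)" and "inj_on snd (SIGMA n:UNIV. lists_length A n)"
    by (auto simp: inj_on_def lists_length_def)
  then have "infsum V (Node ` lists A) = infsum (\<lambda>x. V (Node (snd x))) (SIGMA n:UNIV. lists_length A n)"
    unfolding lists_eq_image_Sigma_lists_length by (simp add: infsum_reindex o_def)
  also have "\<dots> = infsum (\<lambda>n. infsum (\<lambda>ts. Q n * prod_list (map V ts)) (lists_length A n)) UNIV"
    by (subst infsum_Sigma_ennreal) (auto intro!: infsum_cong simp: V lists_length_def)
  also have "\<dots> = infsum (\<lambda>n. Q n * infsum V A ^ n) UNIV"
    by (simp add: infsum_cmult_right_ennreal infsum_prod_list_lists_length)
  finally show ?thesis .
qed

lemma infsum_multiplicative_fixpoint:
  fixes V :: "ptree \<Rightarrow> ennreal" and Q :: "nat \<Rightarrow> ennreal"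
  assumes "\<And>ts. V (Node ts) = Q (length ts) * prod_list (map V ts)"
  shows "infsum V UNIV = infsum (\<lambda>n. Q n * infsum V UNIV ^ n) UNIV"
proof -
  have "UNIV = Node ` lists UNIV"
    by (metis ptree.exhaust lists_UNIV surj_def)
  then show ?thesis using infsum_Node_lists[OF assms, of UNIV] by simp
qed

lemma tsize_ge_1: "tsize t \<ge> 1"
  by (cases t) auto

lemma infsum_multiplicative_le_fixpoint:
  fixes V :: "ptree \<Rightarrow> ennreal" and Q :: "nat \<Rightarrow> ennreal"
  assumes V: "\<And>ts. V (Node ts) = Q (length ts) * prod_list (map V ts)"
    and z: "infsum (\<lambda>n. Q n * z ^ n) UNIV \<le> z"
  shows "infsum V UNIV \<le> z"
proof -
  have bounded: "infsum V {t. tsize t \<le> m} \<le> z" for m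
  proof (induction m)
    case 0
    have "{t. tsize t \<le> 0} = {}"
      by (metis (mono_tags) Collect_empty_eq le_zero_eq not_one_le_zero tsize_ge_1)
    then show ?case by (metis infsum_empty zero_le)
  next
    case (Suc m)
    have "{t. tsize t \<le> Suc m} \<subseteq> Node ` lists {t. tsize t \<le> m}"
    proof
      fix t assume "t \<in> {t. tsize t \<le> Suc m}"
      moreover obtain ts where t: "t = Node ts" by (cases t)
      ultimately have "sum_list (map tsize ts) \<le> m" by simp
      then have "set ts \<subseteq> {t. tsize t \<le> m}"
        using member_le_sum_list[of _ "map tsize ts"] by fastforce
      then show "t \<in> Node ` lists {t. tsize t \<le> m}" using t by auto
    qed
    then have "infsum V {t. tsize t \<le> Suc m} \<le> infsum V (Node ` lists {t. tsize t \<le> m})"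
      by (intro infsum_mono_neutral) (auto simp: nonneg_summable_on_complete)
    also have "\<dots> = infsum (\<lambda>n. Q n * infsum V {t. tsize t \<le> m} ^ n) UNIV"
      by (rule infsum_Node_lists[OF V])
    also have "\<dots> \<le> infsum (\<lambda>n. Q n * z ^ n) UNIV"
      using Suc.IH by (intro infsum_mono mult_left_mono power_mono) (auto simp: nonneg_summable_on_complete)
    finally show ?case using z by simp
  qed
  show ?thesis
  proof (subst nonneg_infsum_complete, simp, rule SUP_least)
    fix F :: "ptree set" assume "F \<in> {F. finite F \<and> F \<subseteq> UNIV}"
    then have "finite F" by simp
    then have "infsum V F \<le> infsum V {t. tsize t \<le> Max (tsize ` F)}"
      by (intro infsum_mono_neutral) (auto simp: nonneg_summable_on_complete)
    then show "sum V F \<le> z" using \<open>finite F\<close> bounded[of "Max (tsize ` F)"] by simp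
  qed
qed

section \<open>The Laplace functional of a Galton--Watson tree\<close>

definition gw_laplace_term :: "(nat \<Rightarrow> real) \<Rightarrow> real \<Rightarrow> (nat \<Rightarrow> real) \<Rightarrow> ptree \<Rightarrow> real" where
  "gw_laplace_term p c g t = gw_weight p t * exp (c * real (tsize t) - node_sum g t)"

definition gw_laplace :: "(nat \<Rightarrow> real) \<Rightarrow> real \<Rightarrow> (nat \<Rightarrow> real) \<Rightarrow> real" where
  "gw_laplace p c g = infsum (gw_laplace_term p c g) UNIV"

lemma gw_laplace_term_Node:
  "gw_laplace_term p c g (Node ts)
     = p (length ts) * exp (c - g (length ts)) * prod_list (map (gw_laplace_term p c g) ts)"
proof -
  have "prod_list (map (gw_laplace_term p c g) ts)
      = prod_list (map (gw_weight p) ts)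
        * exp (c * real (sum_list (map tsize ts)) - sum_list (map (node_sum g) ts))"
    unfolding gw_laplace_term_def
    by (induction ts) (auto simp: algebra_simps exp_add[symmetric] exp_diff)
  then show ?thesis
    by (simp add: gw_laplace_term_def algebra_simps exp_add[symmetric] exp_diff)
qed

lemma gw_weight_nonneg: "(\<And>n. p n \<ge> 0) \<Longrightarrow> gw_weight p t \<ge> 0"
  by (induction p t rule: gw_weight.induct) (force intro!: mult_nonneg_nonneg prod_list_nonneg)

locale offspring_law =
  fixes p :: "nat \<Rightarrow> real"
  assumes p_nonneg: "\<And>n. p n \<ge> 0"
    and p_prob: "p sums 1"
begin

lemma summable_p: "summable p"
  using p_prob by (simp add: sums_iff)

lemma suminf_p: "suminf p = 1"
  using p_prob by (simp add: sums_iff)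

lemma gw_laplace_term_nonneg: "gw_laplace_term p c g t \<ge> 0"
  by (simp add: gw_laplace_term_def gw_weight_nonneg p_nonneg)

lemma ennreal_gw_laplace_term_Node:
  "ennreal (gw_laplace_term p c g (Node ts))
     = ennreal (p (length ts) * exp (c - g (length ts)))
       * prod_list (map (\<lambda>t. ennreal (gw_laplace_term p c g t)) ts)"
proof -
  have "ennreal (gw_laplace_term p c g (Node ts))
      = ennreal (p (length ts) * exp (c - g (length ts)))
        * ennreal (prod_list (map (gw_laplace_term p c g) ts))"
    unfolding gw_laplace_term_Node
    by (rule ennreal_mult) (auto simp: p_nonneg gw_laplace_term_nonneg intro!: prod_list_nonneg)
  also have "ennreal (prod_list (map (gw_laplace_term p c g) ts))
      = prod_list (map (\<lambda>t. ennreal (gw_laplace_term p c g t)) ts)"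
    by (subst ennreal_prod_list) (auto simp: gw_laplace_term_nonneg o_def)
  finally show ?thesis .
qed

context
  fixes c :: real and g :: "nat \<Rightarrow> real"
  assumes c: "c \<le> 0" and g: "\<And>n. g n \<ge> 0"
begin

lemma gw_laplace_factor_le: "p n * exp (c - g n) \<le> p n"
  using c g[of n] p_nonneg[of n] by (simp add: mult_left_le)

lemma summable_gw_laplace_factor: "summable (\<lambda>n. p n * exp (c - g n))"
  by (rule summable_comparison_test'[OF summable_p]) (simp add: p_nonneg gw_laplace_factor_le)

lemma gw_laplace_summable_le_1:
  shows "gw_laplace_term p c g summable_on UNIV" and "gw_laplace p c g \<le> 1"
proof -
  have "infsum (\<lambda>n. ennreal (p n * exp (c - g n)) * 1 ^ n) UNIV
      = ennreal (\<Sum>n. p n * exp (c - g n))"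
    using summable_gw_laplace_factor p_nonneg by (simp add: infsum_ennreal_eq_suminf)
  also have "\<dots> \<le> 1"
    using suminf_le[OF gw_laplace_factor_le summable_gw_laplace_factor summable_p] suminf_p
    by (simp add: ennreal_le_1)
  finally have "infsum (\<lambda>t. ennreal (gw_laplace_term p c g t)) UNIV \<le> ennreal 1"
    using infsum_multiplicative_le_fixpoint[where Q="\<lambda>n. ennreal (p n * exp (c - g n))",
        OF ennreal_gw_laplace_term_Node]
    by simp
  moreover note nonneg_summable_on_if_infsum_ennreal_bounded[OF gw_laplace_term_nonneg this]
  ultimately show summable: "gw_laplace_term p c g summable_on UNIV" and "gw_laplace p c g \<le> 1"
    by (simp_all add: gw_laplace_def infsum_ennreal gw_laplace_term_nonneg)
qed

lemma gw_laplace_nonneg: "gw_laplace p c g \<ge> 0"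
  unfolding gw_laplace_def by (simp add: infsum_nonneg gw_laplace_term_nonneg)

lemma gw_laplace_fixpoint:
  "gw_laplace p c g = (\<Sum>n. p n * exp (c - g n) * gw_laplace p c g ^ n)"
proof -
  define u where "u = gw_laplace p c g"
  have u: "0 \<le> u" "u \<le> 1"
    using gw_laplace_nonneg gw_laplace_summable_le_1 by (simp_all add: u_def)
  have nonneg: "p n * exp (c - g n) * u ^ n \<ge> 0" for n
    using u p_nonneg by simp
  have "p n * exp (c - g n) * u ^ n \<le> p n * exp (c - g n)" for n
    using u p_nonneg[of n] by (intro mult_left_le power_le_one) auto
  then have summable: "summable (\<lambda>n. p n * exp (c - g n) * u ^ n)"
    by (intro summable_comparison_test'[OF summable_gw_laplace_factor]) (simp add: nonneg)
  have power_term: "ennreal (p n * exp (c - g n) * u ^ n) = ennreal (p n * exp (c - g n)) * ennreal u ^ n" for n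
    using u p_nonneg[of n] by (simp add: ennreal_mult ennreal_power)
  have "ennreal u = infsum (\<lambda>t. ennreal (gw_laplace_term p c g t)) UNIV"
    by (simp add: u_def gw_laplace_def infsum_ennreal gw_laplace_summable_le_1 gw_laplace_term_nonneg)
  also have "\<dots> = infsum (\<lambda>n. ennreal (p n * exp (c - g n) * u ^ n)) UNIV"
    unfolding power_term
    by (subst infsum_multiplicative_fixpoint[where Q="\<lambda>n. ennreal (p n * exp (c - g n))",
        OF ennreal_gw_laplace_term_Node]) (simp only: calculation)
  also have "\<dots> = ennreal (\<Sum>n. p n * exp (c - g n) * u ^ n)"
    using summable nonneg by (rule infsum_ennreal_eq_suminf)
  finally show ?thesis
    using u nonneg summable by (simp add: u_def suminf_nonneg)
qed

end

end

section \<open>Regularly varying tails\<close>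

lemma doubling_power_bound:
  fixes G :: "real \<Rightarrow> real"
  assumes X: "X > 0" and \<beta>: "\<beta> \<ge> 0"
    and le_1: "\<And>x. G x \<le> 1"
    and doubling: "\<And>x. x \<ge> X \<Longrightarrow> G (2 * x) \<le> 2 powr (-\<beta>) * G x"
    and x: "x \<ge> X"
  shows "G x \<le> (2 * X) powr \<beta> * x powr (-\<beta>)"
proof -
  have "\<forall>x. X \<le> x \<and> x < 2 ^ j * X \<longrightarrow> G x \<le> (2 * X) powr \<beta> * x powr (-\<beta>)" for j
  proof (induction j)
    case (Suc j)
    show ?case
    proof (intro allI impI)
      fix x assume x: "X \<le> x \<and> x < 2 ^ Suc j * X"
      then have "x > 0" using X by linarith
      show "G x \<le> (2 * X) powr \<beta> * x powr (-\<beta>)"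
      proof (cases "x < 2 * X")
        case True
        have "1 \<le> (2 * X / x) powr \<beta>"
          using True \<open>x > 0\<close> \<beta> by (intro ge_one_powr_ge_zero) auto
        then have "1 \<le> (2 * X) powr \<beta> * x powr (-\<beta>)"
          using \<open>x > 0\<close> X by (simp add: powr_divide powr_minus_divide)
        then show ?thesis
          using le_1[of x] by linarith
      next
        case False
        then have half: "X \<le> x / 2" "x / 2 < 2 ^ j * X" using x by auto
        then have "G (2 * (x / 2)) \<le> 2 powr (-\<beta>) * G (x / 2)"
          by (intro doubling)
        also have "\<dots> \<le> 2 powr (-\<beta>) * ((2 * X) powr \<beta> * (x / 2) powr (-\<beta>))"
          using Suc.IH half by (intro mult_left_mono) auto
        also have "\<dots> = (2 * X) powr \<beta> * x powr (-\<beta>)"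
          using \<open>x > 0\<close> by (simp add: powr_divide field_simps)
        finally show ?thesis by simp
      qed
    qed
  qed simp
  moreover obtain j where "x / X < 2 ^ j"
    using real_arch_pow[of 2 "x / X"] by auto
  ultimately show ?thesis
    using x X by (simp add: field_simps)
qed

lemma tendsto_floor_mult_over_nat:
  fixes lam :: real
  shows "((\<lambda>b::nat. of_int \<lfloor>lam * real b\<rfloor> / real b) \<longlongrightarrow> lam) sequentially"
proof (rule tendsto_sandwich[of "\<lambda>b. lam - 1 / real b" _ _ "\<lambda>_. lam"])
  show "\<forall>\<^sub>F b in sequentially. lam - 1 / real b \<le> of_int \<lfloor>lam * real b\<rfloor> / real b"
    using eventually_gt_at_top[of "0::nat"]
  proof eventually_elim
    case (elim b)
    have "lam * real b - 1 \<le> of_int \<lfloor>lam * real b\<rfloor>" by linarith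
    then have "(lam * real b - 1) / real b \<le> of_int \<lfloor>lam * real b\<rfloor> / real b"
      by (rule divide_right_mono) simp
    then show ?case using elim by (simp add: diff_divide_distrib)
  qed
  show "\<forall>\<^sub>F b in sequentially. of_int \<lfloor>lam * real b\<rfloor> / real b \<le> lam"
    using eventually_gt_at_top[of "0::nat"]
    by eventually_elim (simp add: divide_le_eq)
qed (auto intro!: tendsto_eq_intros)

lemma nat_floor_div_bounds:
  fixes x b :: real
  assumes "b > 0" "x \<ge> 0"
  shows "b * real (nat \<lfloor>x / b\<rfloor>) \<le> x" and "x < b * (real (nat \<lfloor>x / b\<rfloor>) + 1)"
proof -
  have nat_floor: "real (nat \<lfloor>x / b\<rfloor>) = of_int \<lfloor>x / b\<rfloor>"
    using assms by simp
  have "of_int \<lfloor>x / b\<rfloor> \<le> x / b" "x / b < of_int \<lfloor>x / b\<rfloor> + 1"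
    by linarith+
  from mult_left_mono[OF this(1), of b] mult_strict_left_mono[OF this(2) assms(1)]
  show "b * real (nat \<lfloor>x / b\<rfloor>) \<le> x" and "x < b * (real (nat \<lfloor>x / b\<rfloor>) + 1)"
    using assms(1) unfolding nat_floor by simp_all
qed

context offspring_law
begin

abbreviation F :: "real \<Rightarrow> real" where
  "F \<equiv> Fbar p"

lemma summable_Fbar_terms: "summable (\<lambda>i. if real i > x then p i else 0)"
  by (rule summable_comparison_test'[OF summable_p]) (auto simp: p_nonneg)

lemma Fbar_nonneg: "F x \<ge> 0"
  unfolding Fbar_def by (rule suminf_nonneg[OF summable_Fbar_terms]) (simp add: p_nonneg)

lemma Fbar_le_1: "F x \<le> 1"
  unfolding Fbar_def using suminf_le[OF _ summable_Fbar_terms summable_p, of x] p_nonneg suminf_p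
  by auto

lemma Fbar_antimono: "x \<le> y \<Longrightarrow> F y \<le> F x"
  unfolding Fbar_def
  by (rule suminf_le[OF _ summable_Fbar_terms summable_Fbar_terms]) (auto simp: p_nonneg)

lemma Fbar_diff:
  assumes "x \<le> y"
  shows "(\<Sum>i. if x < real i \<and> real i \<le> y then p i else 0) = F x - F y"
proof -
  have "(\<lambda>i. if x < real i \<and> real i \<le> y then p i else 0) =
        (\<lambda>i. (if real i > x then p i else 0) - (if real i > y then p i else 0))"
    using assms by (auto simp: fun_eq_iff)
  then show ?thesis
    unfolding Fbar_def by (simp add: suminf_diff[OF summable_Fbar_terms summable_Fbar_terms])
qed

lemma Fbar_Suc: "F (real n) = p (Suc n) + F (real (Suc n))"
proof -
  have "(\<lambda>i. if real n < real i \<and> real i \<le> real (Suc n) then p i else 0) =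
        (\<lambda>i. if i = Suc n then p i else 0)"
    by (auto simp: fun_eq_iff)
  then show ?thesis
    using Fbar_diff[of "real n" "real (Suc n)"] sums_single[of "Suc n" p] by (simp add: sums_iff)
qed

text \<open>Summation by parts.\<close>

lemma second_moment_partial_sum:
  "(\<Sum>n\<le>N. real n ^ 2 * p n) + real N ^ 2 * F (real N) = (\<Sum>n<N. (2 * real n + 1) * F (real n))"
proof (induction N)
  case (Suc N)
  have "(\<Sum>n\<le>Suc N. real n ^ 2 * p n) + real (Suc N) ^ 2 * F (real (Suc N))
      = ((\<Sum>n\<le>N. real n ^ 2 * p n) + real N ^ 2 * F (real N))
        + (real (Suc N) ^ 2 * (p (Suc N) + F (real (Suc N))) - real N ^ 2 * F (real N))"
    by (simp add: algebra_simps)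
  then show ?case
    using Suc.IH Fbar_Suc[of N] by (simp add: algebra_simps power2_eq_square)
qed simp

lemma tendsto_square_Fbar_0:
  assumes second_moment: "summable (\<lambda>n. real n ^ 2 * p n)"
  shows "((\<lambda>x. x ^ 2 * F x) \<longlongrightarrow> 0) at_top"
proof -
  have "((\<lambda>x. \<Sum>i. if real i > x then real i ^ 2 * p i else 0) \<longlongrightarrow> (\<Sum>i. 0::real)) at_top"
  proof (rule tannerys_theorem[THEN conjunct2, THEN conjunct2])
    show "((\<lambda>x. if real i > x then real i ^ 2 * p i else 0) \<longlongrightarrow> 0) at_top" for i
    proof (rule tendsto_eventually)
      show "\<forall>\<^sub>F x in at_top. (if real i > x then real i ^ 2 * p i else 0) = 0"
        using eventually_ge_at_top[of "real i"] by eventually_elim auto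
    qed
    show "\<forall>\<^sub>F (i, x) in at_top \<times>\<^sub>F at_top.
            norm (if real i > x then real i ^ 2 * p i else 0) \<le> real i ^ 2 * p i"
      by (intro always_eventually) (auto simp: p_nonneg)
  qed (use second_moment in auto)
  then have tail_moment: "((\<lambda>x. \<Sum>i. if real i > x then real i ^ 2 * p i else 0) \<longlongrightarrow> 0) at_top"
    by simp
  have bound: "x ^ 2 * F x \<le> (\<Sum>i. if real i > x then real i ^ 2 * p i else 0)" if "x \<ge> 0" for x
  proof -
    have "x ^ 2 * F x = (\<Sum>i. x ^ 2 * (if real i > x then p i else 0))"
      unfolding Fbar_def using summable_Fbar_terms by (rule suminf_mult[symmetric])
    also have "\<dots> \<le> (\<Sum>i. if real i > x then real i ^ 2 * p i else 0)"
    proof (rule suminf_le[OF _ summable_mult[OF summable_Fbar_terms]])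
      show "summable (\<lambda>i. if real i > x then real i ^ 2 * p i else 0)"
        by (rule summable_comparison_test'[OF second_moment]) (auto simp: p_nonneg)
      show "x ^ 2 * (if real i > x then p i else 0) \<le> (if real i > x then real i ^ 2 * p i else 0)" for i
        using that p_nonneg[of i] by (auto intro!: mult_right_mono power_mono)
    qed
    finally show ?thesis .
  qed
  show ?thesis
  proof (rule tendsto_sandwich[OF _ _ tendsto_const tail_moment])
    show "\<forall>\<^sub>F x in at_top. x ^ 2 * F x \<le> (\<Sum>i. if real i > x then real i ^ 2 * p i else 0)"
      using eventually_ge_at_top[of "0::real"] by eventually_elim (rule bound)
  qed (simp add: Fbar_nonneg)
qed

end

locale regularly_varying_tail = offspring_law +
  fixes \<alpha> :: real and l :: "real \<Rightarrow> real"
  assumes slowly_varying: "slowly_varying l"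
    and tail: "\<And>n::nat. n \<ge> 1 \<Longrightarrow> Fbar p (real n) = real n powr (-\<alpha>) * l (real n)"
begin

lemma eventually_l_pos: "\<forall>\<^sub>F n in sequentially. l (real n) > 0"
proof -
  have "\<forall>\<^sub>F x in at_top. l x > 0"
    using slowly_varying unfolding slowly_varying_def by blast
  then show ?thesis
    using filterlim_real_sequentially by (rule eventually_compose_filterlim)
qed

lemma Fbar_pos: "F x > 0"
proof -
  obtain N where N: "\<And>n. n \<ge> N \<Longrightarrow> l (real n) > 0"
    using eventually_l_pos by (auto simp: eventually_sequentially)
  define n where "n = max N (nat \<lceil>x\<rceil>) + 1"
  have "n \<ge> 1" "n \<ge> N" "real n \<ge> x" unfolding n_def by linarith+
  then have "F (real n) > 0"
    using tail N by simp
  then show ?thesis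
    using Fbar_antimono[OF \<open>real n \<ge> x\<close>] by simp
qed

lemma tendsto_Fbar_mult_nat:
  assumes "K > 0"
  shows "((\<lambda>n. F (real K * real n) / F (real n)) \<longlongrightarrow> real K powr (-\<alpha>)) sequentially"
proof -
  have "((\<lambda>x. l (real K * x) / l x) \<longlongrightarrow> 1) at_top"
    using slowly_varying assms unfolding slowly_varying_def by simp
  then have l_ratio: "((\<lambda>n. l (real K * real n) / l (real n)) \<longlongrightarrow> 1) sequentially"
    using filterlim_compose filterlim_real_sequentially by (fastforce simp: o_def)
  have "\<forall>\<^sub>F n in sequentially.
          F (real K * real n) / F (real n) = real K powr (-\<alpha>) * (l (real K * real n) / l (real n))"
    using eventually_l_pos eventually_ge_at_top[of 1]
  proof eventually_elim
    case (elim n)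
    have "F (real K * real n) = real (K * n) powr (-\<alpha>) * l (real (K * n))"
      using assms elim tail[of "K * n"] by simp
    then show ?case
      using elim tail[of n] by (simp add: powr_mult field_simps)
  qed
  then show ?thesis
    by (rule tendsto_cong[THEN iffD2]) (use tendsto_mult[OF tendsto_const l_ratio] in simp)
qed

lemma tendsto_Fbar_ratio_nat:
  assumes "A > 0" "B > 0"
  shows "((\<lambda>n. F (real A * real n) / F (real B * real n)) \<longlongrightarrow> (real A / real B) powr (-\<alpha>)) sequentially"
proof -
  have "(F (real A * real n) / F (real n)) / (F (real B * real n) / F (real n))
      = F (real A * real n) / F (real B * real n)" for n
    using Fbar_pos[of "real n"] Fbar_pos[of "real B * real n"] by (simp add: field_simps)
  moreover have "((\<lambda>n. (F (real A * real n) / F (real n)) / (F (real B * real n) / F (real n)))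
      \<longlongrightarrow> real A powr (-\<alpha>) / real B powr (-\<alpha>)) sequentially"
    using assms by (intro tendsto_divide tendsto_Fbar_mult_nat) auto
  moreover have "real A powr (-\<alpha>) / real B powr (-\<alpha>) = (real A / real B) powr (-\<alpha>)"
    by (simp add: powr_divide)
  ultimately show ?thesis by (simp only:)
qed

lemma eventually_Fbar_ratio_gt:
  assumes lam: "lam > 0" and y: "y < lam powr (-\<alpha>)"
  shows "\<forall>\<^sub>F x in at_top. y < F (lam * x) / F x"
proof -
  define A where "A = (\<lambda>b::nat. nat \<lfloor>lam * real b\<rfloor> + 2)"
  have "((\<lambda>b. of_int \<lfloor>lam * real b\<rfloor> / real b + 2 * (1 / real b)) \<longlongrightarrow> lam + 2 * 0) sequentially"
    by (intro tendsto_add tendsto_mult tendsto_const tendsto_floor_mult_over_nat lim_1_over_n)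
  moreover have "real (A b) = of_int \<lfloor>lam * real b\<rfloor> + 2" for b
    using lam by (simp add: A_def)
  ultimately have "((\<lambda>b. real (A b) / real b) \<longlongrightarrow> lam) sequentially"
    by (simp add: add_divide_distrib)
  then have "((\<lambda>b. (real (A b) / real b) powr (-\<alpha>)) \<longlongrightarrow> lam powr (-\<alpha>)) sequentially"
    using lam by (intro tendsto_powr tendsto_const) auto
  then have "\<forall>\<^sub>F b in sequentially. y < (real (A b) / real b) powr (-\<alpha>)"
    using y by (rule order_tendstoD)
  then obtain N where N: "\<And>b. b \<ge> N \<Longrightarrow> y < (real (A b) / real b) powr (-\<alpha>)"
    by (auto simp: eventually_sequentially)
  define b where "b = max N 1"
  have yb: "y < (real (A b) / real b) powr (-\<alpha>)" and b: "b \<ge> 1"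
    using N by (simp_all add: b_def)
  then have "\<forall>\<^sub>F m in sequentially. y < F (real (A b) * real m) / F (real b * real m)"
    by (intro order_tendstoD(1)[OF tendsto_Fbar_ratio_nat]) (auto simp: A_def)
  then obtain M where M: "\<And>m. m \<ge> M \<Longrightarrow> y < F (real (A b) * real m) / F (real b * real m)"
    by (auto simp: eventually_sequentially)
  show ?thesis
    using eventually_ge_at_top[of "real b * real (M + A b)"]
  proof eventually_elim
    case (elim x)
    define m where "m = nat \<lfloor>x / real b\<rfloor>"
    have "real (M + A b) \<le> x / real b" using elim b by (simp add: field_simps)
    then have "M + A b \<le> m" unfolding m_def by (rule le_nat_floor)
    have "x \<ge> 0" using elim b by (smt (verit) of_nat_0_le_iff zero_le_mult_iff)
    then have m: "real b * real m \<le> x" "x < real b * (real m + 1)"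
      using b unfolding m_def by (intro nat_floor_div_bounds; simp)+
    have "lam * x \<le> (lam * real b) * (real m + 1)"
      using m(2) lam by (simp add: mult.assoc)
    also have "\<dots> \<le> (real (A b) - 1) * (real m + 1)"
      unfolding A_def using lam by (intro mult_right_mono) linarith+
    also have "\<dots> \<le> real (A b) * real m"
      using \<open>M + A b \<le> m\<close> by (simp add: algebra_simps)
    finally have "F (real (A b) * real m) \<le> F (lam * x)" by (rule Fbar_antimono)
    moreover have "F x \<le> F (real b * real m)"
      using m(1) by (rule Fbar_antimono)
    ultimately have "F (real (A b) * real m) / F (real b * real m) \<le> F (lam * x) / F x"
      using Fbar_pos by (intro frac_le) (auto intro: less_imp_le)
    moreover have "y < F (real (A b) * real m) / F (real b * real m)"
      using \<open>M + A b \<le> m\<close> by (intro M) simp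
    ultimately show ?case by linarith

  qed
qed

lemma eventually_Fbar_ratio_lt:
  assumes lam: "lam > 0" and y: "y > lam powr (-\<alpha>)"
  shows "\<forall>\<^sub>F x in at_top. F (lam * x) / F x < y"
proof -
  define A where "A = (\<lambda>b::nat. nat \<lfloor>lam * real b\<rfloor>)"
  have "((\<lambda>b. of_int \<lfloor>lam * real b\<rfloor> / real b * (real b / (real b + 1))) \<longlongrightarrow> lam * 1) sequentially"
    by (intro tendsto_mult tendsto_floor_mult_over_nat) real_asymp
  moreover have "\<forall>\<^sub>F b in sequentially.
      of_int \<lfloor>lam * real b\<rfloor> / real b * (real b / (real b + 1)) = real (A b) / real (Suc b)"
    using eventually_gt_at_top[of "0::nat"] by eventually_elim (use lam in \<open>simp add: A_def\<close>)
  ultimately have "((\<lambda>b. real (A b) / real (Suc b)) \<longlongrightarrow> lam) sequentially"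
    by (simp add: tendsto_cong)
  then have "((\<lambda>b. (real (A b) / real (Suc b)) powr (-\<alpha>)) \<longlongrightarrow> lam powr (-\<alpha>)) sequentially"
    using lam by (intro tendsto_powr tendsto_const) auto
  then have "\<forall>\<^sub>F b in sequentially. (real (A b) / real (Suc b)) powr (-\<alpha>) < y"
    using y by (rule order_tendstoD)
  then obtain N where N: "\<And>b. b \<ge> N \<Longrightarrow> (real (A b) / real (Suc b)) powr (-\<alpha>) < y"
    by (auto simp: eventually_sequentially)
  define b where "b = max N (nat \<lceil>1 / lam\<rceil>)"
  have "1 / lam \<le> real b"
    using real_nat_ceiling_ge[of "1 / lam"] of_nat_mono[OF max.cobounded2[of "nat \<lceil>1 / lam\<rceil>" N]]
    unfolding b_def by linarith
  then have "1 \<le> lam * real b"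
    using lam by (simp add: field_simps)
  then have A: "A b \<ge> 1" by (simp add: A_def le_nat_floor)
  have yb: "(real (A b) / real (Suc b)) powr (-\<alpha>) < y" using N by (simp add: b_def)
  then have "\<forall>\<^sub>F m in sequentially. F (real (A b) * real m) / F (real (Suc b) * real m) < y"
    using A by (intro order_tendstoD(2)[OF tendsto_Fbar_ratio_nat]) auto
  then obtain M where M: "\<And>m. m \<ge> M \<Longrightarrow> F (real (A b) * real m) / F (real (Suc b) * real m) < y"
    by (auto simp: eventually_sequentially)
  have b: "b \<ge> 1" using A by (cases b) (auto simp: A_def)
  show ?thesis
    using eventually_ge_at_top[of "real b * real (M + b + 1)"]
  proof eventually_elim
    case (elim x)
    define m where "m = nat \<lfloor>x / real b\<rfloor>"
    have "real (M + b + 1) \<le> x / real b" using elim b by (simp add: field_simps)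
    then have "M + b + 1 \<le> m" unfolding m_def by (rule le_nat_floor)
    have "x \<ge> 0" using elim b by (smt (verit) of_nat_0_le_iff zero_le_mult_iff)
    then have m: "real b * real m \<le> x" "x < real b * (real m + 1)"
      using b unfolding m_def by (intro nat_floor_div_bounds; simp)+
    have "real (A b) * real m \<le> (lam * real b) * real m"
      unfolding A_def using lam by (intro mult_right_mono of_nat_floor) simp_all
    also have "\<dots> \<le> lam * x" using m(1) lam by (simp add: mult.assoc)
    finally have "F (lam * x) \<le> F (real (A b) * real m)" by (rule Fbar_antimono)
    moreover have "x \<le> real (Suc b) * real m"
      using m(2) \<open>M + b + 1 \<le> m\<close> by (simp add: algebra_simps)
    then have "F (real (Suc b) * real m) \<le> F x" by (rule Fbar_antimono)
    ultimately have "F (lam * x) / F x \<le> F (real (A b) * real m) / F (real (Suc b) * real m)"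
      using Fbar_pos by (intro frac_le) (auto intro: less_imp_le)
    moreover have "F (real (A b) * real m) / F (real (Suc b) * real m) < y"
      using \<open>M + b + 1 \<le> m\<close> by (intro M) simp
    ultimately show ?case by linarith
  qed
qed

lemma tendsto_Fbar_ratio:
  assumes "lam > 0"
  shows "((\<lambda>x. F (lam * x) / F x) \<longlongrightarrow> lam powr (-\<alpha>)) at_top"
  using assms eventually_Fbar_ratio_gt eventually_Fbar_ratio_lt by (intro order_tendstoI)

text \<open>A Potter-type bound, obtained by iterating \<open>F (2 x) / F x \<rightarrow> 2 powr -\<alpha>\<close>.\<close>

lemma Fbar_power_bound:
  assumes "0 \<le> \<beta>" "\<beta> < \<alpha>"
  obtains C X where "X > 0" "C > 0" "\<And>x. x \<ge> X \<Longrightarrow> F x \<le> C * x powr (-\<beta>)"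
proof -
  have "(2::real) powr (-\<alpha>) < 2 powr (-\<beta>)" using assms by (intro powr_less_mono) auto
  then have "\<forall>\<^sub>F x in at_top. F (2 * x) / F x < 2 powr (-\<beta>)"
    using tendsto_Fbar_ratio[of 2] by (intro order_tendstoD) auto
  then obtain X0 where X0: "\<And>x. x \<ge> X0 \<Longrightarrow> F (2 * x) / F x < 2 powr (-\<beta>)"
    by (auto simp: eventually_at_top_linorder)
  define X where "X = max X0 1"
  have "X > 0" by (simp add: X_def)
  have doubling: "F (2 * x) \<le> 2 powr (-\<beta>) * F x" if "x \<ge> X" for x
  proof -
    have "F (2 * x) / F x < 2 powr (-\<beta>)" using that by (intro X0) (simp add: X_def)
    then show ?thesis using Fbar_pos[of x] by (simp add: pos_divide_less_eq)
  qed
  have "F x \<le> (2 * X) powr \<beta> * x powr (-\<beta>)" if "x \<ge> X" for x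
    using doubling that by (rule doubling_power_bound[OF \<open>X > 0\<close> assms(1) Fbar_le_1])
  then show ?thesis
    using \<open>X > 0\<close> by (intro that[of X "(2 * X) powr \<beta>"]) auto
qed

lemma summable_second_moment:
  assumes "\<alpha> > 2"
  shows "summable (\<lambda>n. real n ^ 2 * p n)"
proof -
  define \<beta> where "\<beta> = (\<alpha> + 2) / 2"
  have \<beta>: "2 < \<beta>" "\<beta> < \<alpha>" using assms by (auto simp: \<beta>_def)
  obtain C X where X: "X > 0" "C > 0" and bound: "\<And>x. x \<ge> X \<Longrightarrow> F x \<le> C * x powr (-\<beta>)"
    by (rule Fbar_power_bound[of \<beta>]) (use \<beta> in auto)
  have "summable (\<lambda>n. 3 * C * real n powr (1 - \<beta>))"
    using \<beta> by (intro summable_mult) (simp add: summable_real_powr_iff)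
  then have summable: "summable (\<lambda>n. (2 * real n + 1) * F (real n))"
  proof (rule summable_comparison_test')
    fix n :: nat assume "n \<ge> nat \<lceil>X\<rceil>"
    then have n: "real n \<ge> X" "real n > 0" using X by linarith+
    have "(2 * real n + 1) * F (real n) \<le> (3 * real n) * (C * real n powr (-\<beta>))"
      using bound[OF n(1)] Fbar_nonneg n X by (intro mult_mono) auto
    also have "\<dots> = 3 * C * (real n powr 1 * real n powr (-\<beta>))"
      using n by simp
    also have "\<dots> = 3 * C * real n powr (1 - \<beta>)"
      by (simp only: powr_add[symmetric]) simp
    finally show "norm ((2 * real n + 1) * F (real n)) \<le> 3 * C * real n powr (1 - \<beta>)"
      using Fbar_nonneg by simp
  qed
  show ?thesis
  proof (rule bounded_imp_summable)
    fix N
    have "(\<Sum>n\<le>N. real n ^ 2 * p n) \<le> (\<Sum>n<N. (2 * real n + 1) * F (real n))"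
    proof -
      have "real N ^ 2 * F (real N) \<ge> 0" using Fbar_nonneg by simp
      then show ?thesis using second_moment_partial_sum[of N] by linarith
    qed
    also have "\<dots> \<le> (\<Sum>n. (2 * real n + 1) * F (real n))"
      using summable Fbar_nonneg by (intro sum_le_suminf) auto
    finally show "(\<Sum>n\<le>N. real n ^ 2 * p n) \<le> (\<Sum>n. (2 * real n + 1) * F (real n))" .
  qed (simp add: p_nonneg)
qed

end

section \<open>The generating function near \<open>1\<close>\<close>

text \<open>\<open>pow_remainder n x = ((1 - x) ^ n - 1 + n x) / x\<^sup>2\<close>, written as a polynomial so that it is
  defined and continuous at \<open>x = 0\<close>.\<close>

fun pow_remainder :: "nat \<Rightarrow> real \<Rightarrow> real" where
  "pow_remainder 0 x = 0"
| "pow_remainder (Suc n) x = (1 - x) * pow_remainder n x + real n"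

lemma pow_remainder_eq: "(1 - x) ^ n - 1 + real n * x = x ^ 2 * pow_remainder n x"
proof (induction n)
  case (Suc n)
  have "(1 - x) ^ Suc n - 1 + real (Suc n) * x = (1 - x) * ((1 - x) ^ n - 1 + real n * x) + real n * x ^ 2"
    by (simp add: algebra_simps power2_eq_square)
  also have "\<dots> = x ^ 2 * pow_remainder (Suc n) x" using Suc by (simp add: algebra_simps)
  finally show ?case .
qed simp

lemma pow_remainder_0: "pow_remainder n 0 = real n * (real n - 1) / 2"
  by (induction n) (auto simp: field_simps)

lemma pow_remainder_bounds:
  assumes "0 \<le> x" "x \<le> 1"
  shows "0 \<le> pow_remainder n x" and "pow_remainder n x \<le> real n ^ 2"
proof -
  have "0 \<le> pow_remainder n x \<and> pow_remainder n x \<le> pow_remainder n 0"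
  proof (induction n)
    case (Suc n)
    then have "(1 - x) * pow_remainder n x \<le> pow_remainder n x"
      using assms by (simp add: mult_left_le_one_le)
    then show ?case using Suc assms by auto
  qed simp
  moreover have "pow_remainder n 0 \<le> real n ^ 2"
    unfolding pow_remainder_0 by (simp add: power2_eq_square field_simps)
  ultimately show "0 \<le> pow_remainder n x" and "pow_remainder n x \<le> real n ^ 2"
    by auto
qed

lemma pow_remainder_ge_1:
  assumes "0 \<le> x" "x \<le> 1" "n \<ge> 2"
  shows "pow_remainder n x \<ge> 1"
proof -
  obtain m where m: "n = Suc m" "m \<ge> 1" using assms(3) by (cases n) auto
  have "(1 - x) * pow_remainder m x \<ge> 0" using pow_remainder_bounds[OF assms(1,2)] assms by simp
  then show ?thesis using m by simp
qed

lemma isCont_pow_remainder: "isCont (pow_remainder n) x"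
  by (induction n) (auto intro!: continuous_intros)

locale critical_offspring_law = offspring_law +
  assumes p_crit: "(\<lambda>n. real n * p n) sums 1"
    and p_nondeg: "p 1 \<noteq> 1"
    and second_moment: "summable (\<lambda>n. real n ^ 2 * p n)"
begin

definition pgf_remainder :: "real \<Rightarrow> real" where
  "pgf_remainder x = (\<Sum>n. p n * pow_remainder n x)"

lemma summable_pgf_remainder:
  assumes "0 \<le> x" "x \<le> 1"
  shows "summable (\<lambda>n. p n * pow_remainder n x)"
  by (rule summable_comparison_test'[OF second_moment])
     (use pow_remainder_bounds[OF assms] p_nonneg in \<open>auto simp: mult.commute intro!: mult_left_mono\<close>)

lemma pgf_eq_remainder:
  assumes x: "0 \<le> x" "x \<le> 1"
  shows "(\<Sum>n. p n * (1 - x) ^ n) - 1 + x = x ^ 2 * pgf_remainder x"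
proof -
  have summable_pgf: "summable (\<lambda>n. p n * (1 - x) ^ n)"
    by (rule summable_comparison_test'[OF summable_p])
       (use x p_nonneg in \<open>auto intro!: mult_left_le power_le_one\<close>)
  have summable_mean: "summable (\<lambda>n. x * (real n * p n))"
    using p_crit by (intro summable_mult) (simp add: sums_iff)
  have "(\<Sum>n. p n * (1 - x) ^ n) - 1 + x
      = (\<Sum>n. p n * (1 - x) ^ n) - (\<Sum>n. p n) + (\<Sum>n. x * (real n * p n))"
    using suminf_p p_crit by (simp add: suminf_mult sums_iff)
  also have "\<dots> = (\<Sum>n. p n * (1 - x) ^ n - p n + x * (real n * p n))"
    using summable_pgf summable_p summable_mean by (simp add: suminf_diff suminf_add summable_diff)
  also have "\<dots> = (\<Sum>n. x ^ 2 * (p n * pow_remainder n x))"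
  proof (intro suminf_cong)
    fix n
    have "p n * (1 - x) ^ n - p n + x * (real n * p n) = p n * ((1 - x) ^ n - 1 + real n * x)"
      by (simp add: algebra_simps)
    then show "p n * (1 - x) ^ n - p n + x * (real n * p n) = x ^ 2 * (p n * pow_remainder n x)"
      by (simp add: pow_remainder_eq)
  qed
  also have "\<dots> = x ^ 2 * pgf_remainder x"
    unfolding pgf_remainder_def using summable_pgf_remainder[OF x] by (simp add: suminf_mult)
  finally show ?thesis .
qed

lemma pgf_remainder_0: "pgf_remainder 0 = ((\<Sum>n. real n ^ 2 * p n) - 1) / 2"
proof -
  have mean: "summable (\<lambda>n. real n * p n)" "(\<Sum>n. real n * p n) = 1"
    using p_crit by (simp_all add: sums_iff)
  have "pgf_remainder 0 = (\<Sum>n. (real n ^ 2 * p n - real n * p n) / 2)"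
    unfolding pgf_remainder_def pow_remainder_0
    by (intro suminf_cong) (simp add: field_simps power2_eq_square)
  also have "\<dots> = (\<Sum>n. real n ^ 2 * p n - real n * p n) / 2"
    using second_moment mean by (intro suminf_divide summable_diff)
  also have "\<dots> = ((\<Sum>n. real n ^ 2 * p n) - (\<Sum>n. real n * p n)) / 2"
    using second_moment mean by (subst suminf_diff) auto
  finally show ?thesis using mean by simp
qed

lemma pgf_remainder_continuous: "continuous (at 0 within {0..}) pgf_remainder"
proof -
  have "((\<lambda>x. \<Sum>n. p n * pow_remainder n x) \<longlongrightarrow> (\<Sum>n. p n * pow_remainder n 0)) (at_right 0)"
  proof (rule tannerys_theorem[THEN conjunct2, THEN conjunct2])
    show "((\<lambda>x. p n * pow_remainder n x) \<longlongrightarrow> p n * pow_remainder n 0) (at_right 0)" for n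
    proof -
      have "(pow_remainder n \<longlongrightarrow> pow_remainder n 0) (at_right 0)"
        using isCont_pow_remainder[where n=n and x=0] unfolding isCont_def
        by (rule tendsto_mono[OF at_le[OF subset_UNIV], rotated])
      then show ?thesis by (intro tendsto_mult tendsto_const)
    qed
    have near_0: "\<forall>\<^sub>F x in at_right (0::real). 0 \<le> x \<and> x \<le> 1"
      unfolding eventually_at_right_field by (rule exI[of _ 1]) auto
    have bound: "norm (p n * pow_remainder n x) \<le> real n ^ 2 * p n" if "0 \<le> x" "x \<le> 1" for n x
      using pow_remainder_bounds[OF that, of n] p_nonneg[of n]
      by (simp add: abs_mult mult.commute mult_left_mono)
    show "\<forall>\<^sub>F (n, x) in at_top \<times>\<^sub>F at_right 0.
        norm (p n * pow_remainder n x) \<le> real n ^ 2 * p n"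
      using eventually_prodI[OF always_eventually[of "\<lambda>_::nat. True"] near_0]
      by (rule eventually_mono) (use bound in \<open>auto simp: case_prod_unfold\<close>)
  qed (use second_moment in auto)
  then show ?thesis
    unfolding continuous_within at_within_Ici_at_right pgf_remainder_def by simp
qed

lemma exists_p_pos_ge_2: "\<exists>n\<ge>2. p n > 0"
proof (rule ccontr)
  assume "\<not> (\<exists>n\<ge>2. p n > 0)"
  then have "p n = 0" if "n \<ge> 2" for n
    using that p_nonneg[of n] by force
  then have "(\<lambda>n. real n * p n) = (\<lambda>n. if n = 1 then p 1 else 0)"
    by (force simp: fun_eq_iff less_2_cases_iff not_le)
  then have "(\<lambda>n. real n * p n) sums p 1" using sums_single[of 1 "\<lambda>_. p 1"] by simp
  then show False using p_crit p_nondeg sums_unique2 by blast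
qed

lemma pgf_remainder_lower_bound: "\<exists>c>0. \<forall>x. 0 \<le> x \<and> x \<le> 1 \<longrightarrow> c \<le> pgf_remainder x"
proof -
  obtain n0 where n0: "n0 \<ge> 2" "p n0 > 0" using exists_p_pos_ge_2 by blast
  have "p n0 \<le> pgf_remainder x" if x: "0 \<le> x" "x \<le> 1" for x
  proof -
    have "p n0 \<le> p n0 * pow_remainder n0 x" using pow_remainder_ge_1[OF x n0(1)] n0 by simp
    also have "\<dots> \<le> pgf_remainder x" unfolding pgf_remainder_def
      by (rule sum_le_suminf[OF summable_pgf_remainder[OF x], of "{n0}", simplified])
         (use x pow_remainder_bounds p_nonneg in auto)
    finally show ?thesis .
  qed
  then show ?thesis using n0 by blast
qed

lemma variance_pos: "(\<Sum>n. real n ^ 2 * p n) - 1 > 0"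
  using pgf_remainder_lower_bound pgf_remainder_0 by force

end

section \<open>Step-function approximation against the tail measure\<close>

definition step_approx :: "(real \<Rightarrow> real) \<Rightarrow> real \<Rightarrow> real \<Rightarrow> nat \<Rightarrow> real \<Rightarrow> real" where
  "step_approx h y0 w m t =
     (\<Sum>j=1..m. h (y0 + real j * w) * indicator {y0 + (real j - 1) * w <.. y0 + real j * w} t)"

lemma step_approx_outside:
  assumes "w > 0" "t \<le> y0 \<or> t > y0 + real m * w"
  shows "step_approx h y0 w m t = 0"
  unfolding step_approx_def
proof (intro sum.neutral ballI)
  fix j assume "j \<in> {1..m}"
  then have "y0 \<le> y0 + (real j - 1) * w" "y0 + real j * w \<le> y0 + real m * w"
    using assms(1) by auto
  then show "h (y0 + real j * w) * indicator {y0 + (real j - 1) * w <.. y0 + real j * w} t = 0"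
    using assms(2) by auto
qed

lemma step_approx_eq_grid_value:
  assumes w: "w > 0" and t: "y0 < t" "t \<le> y0 + real m * w"
  obtains j where "j \<in> {1..m}" "step_approx h y0 w m t = h (y0 + real j * w)"
    "\<bar>t - (y0 + real j * w)\<bar> \<le> w"
proof -
  define r where "r = (t - y0) / w"
  have r: "0 < r" "r \<le> real m" using t w unfolding r_def by (auto simp: field_simps)
  define j where "j = nat \<lceil>r\<rceil>"
  have j: "real j - 1 < r" "r \<le> real j" "j \<in> {1..m}"
    using r unfolding j_def by (auto simp: le_nat_iff ceiling_le_iff) linarith+
  have "t \<in> {y0 + (real i - 1) * w <.. y0 + real i * w} \<longleftrightarrow> i = j" for i
  proof -
    have "t \<in> {y0 + (real i - 1) * w <.. y0 + real i * w} \<longleftrightarrow> real i - 1 < r \<and> r \<le> real i"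
      using w unfolding r_def by (auto simp: field_simps)
    also have "\<dots> \<longleftrightarrow> \<lceil>r\<rceil> = int i" by (simp add: ceiling_eq_iff)
    finally show ?thesis using r(1) unfolding j_def by auto
  qed
  then have "step_approx h y0 w m t = (\<Sum>i=1..m. if i = j then h (y0 + real i * w) else 0)"
    unfolding step_approx_def by (intro sum.cong) (auto simp: indicator_def)
  also have "\<dots> = h (y0 + real j * w)" using j by simp
  finally have at_grid: "step_approx h y0 w m t = h (y0 + real j * w)" .
  have "t - (y0 + real j * w) = (r - real j) * w"
    using w unfolding r_def by (simp add: field_simps)
  moreover have "\<bar>r - real j\<bar> * w \<le> 1 * w"
    using j w by (intro mult_right_mono) (auto simp: abs_le_iff)
  ultimately have "\<bar>t - (y0 + real j * w)\<bar> \<le> w"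
    using w by (simp add: abs_mult)
  then show ?thesis using j at_grid that by blast
qed

lemma step_approx_error:
  fixes h :: "real \<Rightarrow> real"
  assumes y0: "y0 > 0" and w: "w > 0" and e: "e \<ge> 0" and M: "M = y0 + real m * w"
    and uc: "\<And>x x'. 0 \<le> x \<Longrightarrow> x \<le> M \<Longrightarrow> 0 \<le> x' \<Longrightarrow> x' \<le> M \<Longrightarrow> \<bar>x - x'\<bar> \<le> w \<Longrightarrow> \<bar>h x - h x'\<bar> \<le> e"
    and vanish: "\<And>x. 0 \<le> x \<Longrightarrow> x \<le> y0 \<Longrightarrow> h x = 0"
    and bounded: "\<And>x. 0 \<le> x \<Longrightarrow> \<bar>h x\<bar> \<le> 1"
    and t: "t \<ge> 0"
  shows "\<bar>h t - step_approx h y0 w m t\<bar> \<le> e * indicator {y0<..} t + indicator {M<..} t"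
proof -
  consider "t \<le> y0" | "t > M" | "y0 < t \<and> t \<le> M" by linarith
  then show ?thesis
  proof cases
    case 1
    then show ?thesis using step_approx_outside[OF w] vanish t e by simp
  next
    case 2
    moreover have "M \<ge> y0" using M w by simp
    ultimately show ?thesis using step_approx_outside[OF w] M bounded[OF t] e by simp
  next
    case 3
    then obtain j where j: "j \<in> {1..m}" "step_approx h y0 w m t = h (y0 + real j * w)"
        "\<bar>t - (y0 + real j * w)\<bar> \<le> w"
      using step_approx_eq_grid_value[OF w] M by blast
    then have "\<bar>h t - h (y0 + real j * w)\<bar> \<le> e"
      using 3 y0 w M by (intro uc) auto
    then show ?thesis using j 3 by simp
  qed
qed

text \<open>The integral of \<open>step_approx h y0 w m\<close> against the measure with tail function \<open>T\<close>.\<close>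

definition step_sum :: "(real \<Rightarrow> real) \<Rightarrow> real \<Rightarrow> real \<Rightarrow> nat \<Rightarrow> (real \<Rightarrow> real) \<Rightarrow> real" where
  "step_sum h y0 w m T = (\<Sum>j=1..m. h (y0 + real j * w) * (T (y0 + (real j - 1) * w) - T (y0 + real j * w)))"

lemma powr_tail_integral:
  fixes a \<alpha> :: real
  assumes a: "a > 0" and \<alpha>: "\<alpha> > 0"
  shows "integrable lborel (\<lambda>x. indicator {a<..} x * x powr (-\<alpha> - 1))"
    and "(\<integral>x. indicator {a<..} x * x powr (-\<alpha> - 1) \<partial>lborel) = a powr (-\<alpha>) / \<alpha>"
proof -
  have "((\<lambda>x. x powr (-\<alpha> - 1)) has_integral a powr (-\<alpha>) / \<alpha>) {a..}"
    using has_integral_powr_to_inf[of "-\<alpha> - 1" a] a \<alpha> by simp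
  moreover have "negligible {a}" by simp
  ultimately have has_integral: "((\<lambda>x. x powr (-\<alpha> - 1)) has_integral a powr (-\<alpha>) / \<alpha>) {a<..}"
    by (subst has_integral_spike_set_eq[of _ "{a..}"]) (auto intro: negligible_subset)
  then have "(\<lambda>x. x powr (-\<alpha> - 1)) absolutely_integrable_on {a<..}"
    by (intro nonnegative_absolutely_integrable_1) (auto simp: integrable_on_def)
  moreover have measurable: "(\<lambda>x. indicator {a<..} x *\<^sub>R x powr (-\<alpha> - 1)) \<in> borel_measurable lborel"
    by measurable
  ultimately have set_integrable: "set_integrable lborel {a<..} (\<lambda>x. x powr (-\<alpha> - 1))"
    unfolding set_integrable_def using integrable_completion[OF measurable] by simp
  then show "integrable lborel (\<lambda>x. indicator {a<..} x * x powr (-\<alpha> - 1))"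
    unfolding set_integrable_def by simp
  show "(\<integral>x. indicator {a<..} x * x powr (-\<alpha> - 1) \<partial>lborel) = a powr (-\<alpha>) / \<alpha>"
    using set_borel_integral_eq_integral(2)[OF set_integrable] has_integral
    by (simp add: integral_unique set_lebesgue_integral_def)
qed

lemma indicator_Ioc_eq_diff:
  fixes a b x :: real
  shows "a \<le> b \<Longrightarrow> (indicator {a<..b} x :: real) = indicator {a<..} x - indicator {b<..} x"
  by (auto simp: indicator_def not_less)

lemma step_approx_powr_eq_sum:
  assumes "y0 > 0" "w > 0"
  shows "indicator {0<..} x * (step_approx h y0 w m x * x powr (-\<alpha> - 1))
    = (\<Sum>j=1..m. h (y0 + real j * w) * (indicator {y0 + (real j - 1) * w<..} x * x powr (-\<alpha> - 1)
                                       - indicator {y0 + real j * w<..} x * x powr (-\<alpha> - 1)))"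
proof (cases "x > 0")
  case True
  have split_j: "indicator {y0 + (real j - 1) * w<..y0 + real j * w} x
      = indicator {y0 + (real j - 1) * w<..} x - (indicator {y0 + real j * w<..} x :: real)" for j
    using assms(2) by (intro indicator_Ioc_eq_diff) (simp add: algebra_simps)
  then show ?thesis
    using True unfolding step_approx_def sum_distrib_right split_j by (simp add: algebra_simps)
next
  case False
  have "(\<Sum>j=1..m. h (y0 + real j * w) * (indicator {y0 + (real j - 1) * w<..} x * x powr (-\<alpha> - 1)
                                       - indicator {y0 + real j * w<..} x * x powr (-\<alpha> - 1))) = 0"
  proof (intro sum.neutral ballI)
    fix j assume "j \<in> {1..m}"
    then have "x < y0 + (real j - 1) * w" "x < y0 + real j * w"
      using False assms by (smt (verit) atLeastAtMost_iff mult_nonneg_nonneg of_nat_1 of_nat_le_iff)+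
    then show "h (y0 + real j * w) * (indicator {y0 + (real j - 1) * w<..} x * x powr (-\<alpha> - 1)
                                       - indicator {y0 + real j * w<..} x * x powr (-\<alpha> - 1)) = 0"
      by simp
  qed
  then show ?thesis
    using False by simp
qed

lemma integral_step_approx_powr:
  assumes \<alpha>: "\<alpha> > 0" and y0: "y0 > 0" and w: "w > 0"
  shows "set_integrable lborel {0<..} (\<lambda>x. step_approx h y0 w m x * x powr (-\<alpha> - 1))"
    and "\<alpha> * (LBINT x:{0<..}. step_approx h y0 w m x * x powr (-\<alpha> - 1)) = step_sum h y0 w m (\<lambda>a. a powr (-\<alpha>))"
proof -
  define G where "G = (\<lambda>a x. indicator {a<..} x * (x::real) powr (-\<alpha> - 1))"
  have pos: "y0 + (real j - 1) * w > 0" "y0 + real j * w > 0" if "j \<in> {1..m}" for j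
    using that y0 w by (smt (verit) atLeastAtMost_iff mult_nonneg_nonneg of_nat_1 of_nat_le_iff)+
  have G: "integrable lborel (G a)" "integral\<^sup>L lborel (G a) = a powr (-\<alpha>) / \<alpha>" if "a > 0" for a
    unfolding G_def using powr_tail_integral that \<alpha> by auto
  define S where "S = (\<lambda>x. \<Sum>j=1..m. h (y0 + real j * w) * (G (y0 + (real j - 1) * w) x - G (y0 + real j * w) x))"
  have eq: "indicator {0<..} x * (step_approx h y0 w m x * x powr (-\<alpha> - 1)) = S x" for x
    unfolding S_def G_def using step_approx_powr_eq_sum[OF y0 w] by simp
  have integrable: "integrable lborel S"
    unfolding S_def using G pos
    by (intro Bochner_Integration.integrable_sum integrable_mult_right Bochner_Integration.integrable_diff) auto
  then show "set_integrable lborel {0<..} (\<lambda>x. step_approx h y0 w m x * x powr (-\<alpha> - 1))"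
    unfolding set_integrable_def by (simp add: eq)
  have "(LBINT x:{0<..}. step_approx h y0 w m x * x powr (-\<alpha> - 1)) = integral\<^sup>L lborel S"
    unfolding set_lebesgue_integral_def by (simp add: eq)
  also have "\<dots> = (\<Sum>j=1..m. h (y0 + real j * w)
      * (integral\<^sup>L lborel (G (y0 + (real j - 1) * w)) - integral\<^sup>L lborel (G (y0 + real j * w))))"
    unfolding S_def using G pos
    by (subst Bochner_Integration.integral_sum) (auto intro!: sum.cong Bochner_Integration.integrable_diff)
  also have "\<dots> = step_sum h y0 w m (\<lambda>a. a powr (-\<alpha>)) / \<alpha>"
    unfolding step_sum_def sum_divide_distrib using G pos
    by (intro sum.cong refl) (simp add: diff_divide_distrib[symmetric])
  finally show "\<alpha> * (LBINT x:{0<..}. step_approx h y0 w m x * x powr (-\<alpha> - 1)) = step_sum h y0 w m (\<lambda>a. a powr (-\<alpha>))"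
    using \<alpha> by simp
qed

lemma set_integrable_powr_weight:
  fixes h :: "real \<Rightarrow> real"
  assumes \<alpha>: "\<alpha> > 0" and y0: "y0 > 0"
    and vanish: "\<And>x. 0 \<le> x \<Longrightarrow> x \<le> y0 \<Longrightarrow> h x = 0"
    and bounded: "\<And>x. 0 \<le> x \<Longrightarrow> \<bar>h x\<bar> \<le> 1"
    and cont: "continuous_on {0<..} h"
  shows "set_integrable lborel {0<..} (\<lambda>x. h x * x powr (-\<alpha> - 1))"
  unfolding set_integrable_def
proof (rule Bochner_Integration.integrable_bound[OF powr_tail_integral(1)[OF y0 \<alpha>]])
  have "continuous_on {0<..} (\<lambda>x. h x * x powr (-\<alpha> - 1))"
    using cont by (intro continuous_intros) auto
  then have "(\<lambda>x. indicator {0<..} x *\<^sub>R (h x * x powr (-\<alpha> - 1))) \<in> borel_measurable borel"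
    by (intro borel_measurable_continuous_on_indicator) auto
  then show "(\<lambda>x. indicator {0<..} x *\<^sub>R (h x * x powr (-\<alpha> - 1))) \<in> borel_measurable lborel"
    by simp
  show "AE x in lborel. norm (indicator {0<..} x *\<^sub>R (h x * x powr (-\<alpha> - 1)))
      \<le> norm (indicator {y0<..} x * x powr (-\<alpha> - 1))"
  proof (intro AE_I2)
    fix x :: real
    show "norm (indicator {0<..} x *\<^sub>R (h x * x powr (-\<alpha> - 1)))
        \<le> norm (indicator {y0<..} x * x powr (-\<alpha> - 1))"
    proof (cases "x > y0")
      case True
      then show ?thesis
        using y0 bounded[of x] by (simp add: abs_mult mult_left_le_one_le)
    qed (use vanish in \<open>auto simp: indicator_def\<close>)
  qed
qed

lemma integral_step_approx_error:
  fixes h :: "real \<Rightarrow> real"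
  assumes \<alpha>: "\<alpha> > 0" and y0: "y0 > 0" and w: "w > 0" and e: "e \<ge> 0" and M: "M = y0 + real m * w"
    and uc: "\<And>x x'. 0 \<le> x \<Longrightarrow> x \<le> M \<Longrightarrow> 0 \<le> x' \<Longrightarrow> x' \<le> M \<Longrightarrow> \<bar>x - x'\<bar> \<le> w \<Longrightarrow> \<bar>h x - h x'\<bar> \<le> e"
    and vanish: "\<And>x. 0 \<le> x \<Longrightarrow> x \<le> y0 \<Longrightarrow> h x = 0"
    and bounded: "\<And>x. 0 \<le> x \<Longrightarrow> \<bar>h x\<bar> \<le> 1"
    and cont: "continuous_on {0<..} h"
  shows "\<bar>\<alpha> * (LBINT x:{0<..}. h x * x powr (-\<alpha> - 1)) - step_sum h y0 w m (\<lambda>a. a powr (-\<alpha>))\<bar>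
           \<le> e * y0 powr (-\<alpha>) + M powr (-\<alpha>)"
proof -
  define G where "G = (\<lambda>a x. indicator {a<..} x * (x::real) powr (-\<alpha> - 1))"
  have "M > 0" using M y0 w by (smt (verit) mult_nonneg_nonneg of_nat_0_le_iff)
  note G = powr_tail_integral[OF y0 \<alpha>] powr_tail_integral[OF \<open>M > 0\<close> \<alpha>]
  note step = integral_step_approx_powr[OF \<alpha> y0 w, of h m]
  have H: "set_integrable lborel {0<..} (\<lambda>x. h x * x powr (-\<alpha> - 1))"
    using \<alpha> y0 vanish bounded cont by (rule set_integrable_powr_weight)
  have pointwise: "\<bar>indicator {0<..} x * (h x * x powr (-\<alpha> - 1) - step_approx h y0 w m x * x powr (-\<alpha> - 1))\<bar>
      \<le> e * G y0 x + G M x" for x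
  proof (cases "x > 0")
    case True
    have "\<bar>h x - step_approx h y0 w m x\<bar> * x powr (-\<alpha> - 1)
        \<le> (e * indicator {y0<..} x + indicator {M<..} x) * x powr (-\<alpha> - 1)"
      using True by (intro mult_right_mono step_approx_error[OF y0 w e M uc vanish bounded]) auto
    moreover have "\<bar>h x * x powr (-\<alpha> - 1) - step_approx h y0 w m x * x powr (-\<alpha> - 1)\<bar>
        = \<bar>h x - step_approx h y0 w m x\<bar> * x powr (-\<alpha> - 1)"
      by (simp add: abs_mult abs_of_nonneg flip: left_diff_distrib)
    ultimately show ?thesis
      using True by (simp add: G_def algebra_simps)
  next
    case False
    then show ?thesis using y0 \<open>M > 0\<close> by (simp add: G_def)
  qed
  have "\<bar>(LBINT x:{0<..}. h x * x powr (-\<alpha> - 1)) - (LBINT x:{0<..}. step_approx h y0 w m x * x powr (-\<alpha> - 1))\<bar>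
      = \<bar>\<integral>x. indicator {0<..} x * (h x * x powr (-\<alpha> - 1) - step_approx h y0 w m x * x powr (-\<alpha> - 1)) \<partial>lborel\<bar>"
    using H step(1) unfolding set_lebesgue_integral_def set_integrable_def
    by (simp add: right_diff_distrib)
  also have "\<dots> \<le> \<integral>x. e * G y0 x + G M x \<partial>lborel"
    using H step(1) G pointwise unfolding set_integrable_def G_def
    by (intro integral_abs_bound_integral) (auto simp: right_diff_distrib)
  also have "\<dots> = e * (y0 powr (-\<alpha>) / \<alpha>) + M powr (-\<alpha>) / \<alpha>"
    using G by (simp add: G_def)
  finally have bound: "\<bar>(LBINT x:{0<..}. h x * x powr (-\<alpha> - 1))
      - (LBINT x:{0<..}. step_approx h y0 w m x * x powr (-\<alpha> - 1))\<bar>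
      \<le> e * (y0 powr (-\<alpha>) / \<alpha>) + M powr (-\<alpha>) / \<alpha>" .
  have "\<bar>\<alpha> * (LBINT x:{0<..}. h x * x powr (-\<alpha> - 1)) - step_sum h y0 w m (\<lambda>a. a powr (-\<alpha>))\<bar>
      = \<alpha> * \<bar>(LBINT x:{0<..}. h x * x powr (-\<alpha> - 1))
          - (LBINT x:{0<..}. step_approx h y0 w m x * x powr (-\<alpha> - 1))\<bar>"
    using \<alpha> by (simp add: step(2)[symmetric] abs_mult flip: right_diff_distrib)
  also have "\<dots> \<le> \<alpha> * (e * (y0 powr (-\<alpha>) / \<alpha>) + M powr (-\<alpha>) / \<alpha>)"
    using bound \<alpha> by (intro mult_left_mono) auto
  also have "\<dots> = e * y0 powr (-\<alpha>) + M powr (-\<alpha>)"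
    using \<alpha> by (simp add: field_simps)
  finally show ?thesis .
qed

context offspring_law
begin

lemma sums_Fbar_scaled:
  assumes "\<psi> > 0"
  shows "(\<lambda>n. p n * indicator {a<..} (real n / \<psi>)) sums F (\<psi> * a)"
proof -
  have "p n * indicator {a<..} (real n / \<psi>) = (if real n > \<psi> * a then p n else 0)" for n
    using assms by (auto simp: indicator_def field_simps)
  then show ?thesis
    unfolding Fbar_def using summable_Fbar_terms by (simp add: summable_sums)
qed

lemma sums_step_approx_scaled:
  assumes "\<psi> > 0" "w > 0"
  shows "(\<lambda>n. p n * step_approx h y0 w m (real n / \<psi>)) sums step_sum h y0 w m (\<lambda>a. F (\<psi> * a))"
proof -
  have "(\<lambda>n. p n * indicator {a<..} (real n / \<psi>) - p n * indicator {b<..} (real n / \<psi>))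
      sums (F (\<psi> * a) - F (\<psi> * b))" for a b
    using assms(1) by (intro sums_diff sums_Fbar_scaled)
  moreover have "p n * indicator {y0 + (real j - 1) * w<..y0 + real j * w} t
      = p n * indicator {y0 + (real j - 1) * w<..} t - p n * indicator {y0 + real j * w<..} t" for n j t
    using assms(2) by (simp add: indicator_Ioc_eq_diff right_diff_distrib)
  ultimately have "(\<lambda>n. p n * indicator {y0 + (real j - 1) * w<..y0 + real j * w} (real n / \<psi>))
      sums (F (\<psi> * (y0 + (real j - 1) * w)) - F (\<psi> * (y0 + real j * w)))" for j
    by (simp only:)
  then have "(\<lambda>n. \<Sum>j=1..m. h (y0 + real j * w)
                * (p n * indicator {y0 + (real j - 1) * w<..y0 + real j * w} (real n / \<psi>)))
      sums step_sum h y0 w m (\<lambda>a. F (\<psi> * a))"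
    unfolding step_sum_def by (intro sums_sum sums_mult)
  then show ?thesis
    unfolding step_approx_def sum_distrib_left by (simp add: ac_simps)
qed

lemma series_step_approx_error:
  fixes h :: "real \<Rightarrow> real"
  assumes \<psi>: "\<psi> > 0"
    and y0: "y0 > 0" and w: "w > 0" and e: "e \<ge> 0" and M: "M = y0 + real m * w"
    and uc: "\<And>x x'. 0 \<le> x \<Longrightarrow> x \<le> M \<Longrightarrow> 0 \<le> x' \<Longrightarrow> x' \<le> M \<Longrightarrow> \<bar>x - x'\<bar> \<le> w \<Longrightarrow> \<bar>h x - h x'\<bar> \<le> e"
    and vanish: "\<And>x. 0 \<le> x \<Longrightarrow> x \<le> y0 \<Longrightarrow> h x = 0"
    and bounded: "\<And>x. 0 \<le> x \<Longrightarrow> \<bar>h x\<bar> \<le> 1"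
  shows "\<bar>(\<Sum>n. p n * h (real n / \<psi>)) - step_sum h y0 w m (\<lambda>a. F (\<psi> * a))\<bar>
           \<le> e * F (\<psi> * y0) + F (\<psi> * M)"
proof -
  define D where "D = (\<lambda>n. p n * h (real n / \<psi>) - p n * step_approx h y0 w m (real n / \<psi>))"
  define g where "g = (\<lambda>n. e * (p n * indicator {y0<..} (real n / \<psi>)) + p n * indicator {M<..} (real n / \<psi>))"
  have g: "g sums (e * F (\<psi> * y0) + F (\<psi> * M))"
    unfolding g_def using \<psi> by (intro sums_add sums_mult sums_Fbar_scaled)
  have D_le: "norm (D n) \<le> g n" for n
  proof -
    have "p n * \<bar>h (real n / \<psi>) - step_approx h y0 w m (real n / \<psi>)\<bar>
        \<le> p n * (e * indicator {y0<..} (real n / \<psi>) + indicator {M<..} (real n / \<psi>))"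
      using \<psi> p_nonneg by (intro mult_left_mono step_approx_error[OF y0 w e M uc vanish bounded]) auto
    moreover have "norm (D n) = p n * \<bar>h (real n / \<psi>) - step_approx h y0 w m (real n / \<psi>)\<bar>"
      using p_nonneg[of n] by (simp add: D_def abs_mult flip: right_diff_distrib)
    moreover have "p n * (e * indicator {y0<..} (real n / \<psi>) + indicator {M<..} (real n / \<psi>)) = g n"
      by (simp add: g_def algebra_simps)
    ultimately show ?thesis by simp
  qed
  have "norm (p n * h (real n / \<psi>)) \<le> p n" for n
    using bounded[of "real n / \<psi>"] \<psi> p_nonneg[of n] by (simp add: abs_mult mult_left_le)
  then have summable_h: "summable (\<lambda>n. p n * h (real n / \<psi>))"
    by (intro summable_comparison_test'[OF summable_p])
  have step: "summable (\<lambda>n. p n * step_approx h y0 w m (real n / \<psi>))"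
    "(\<Sum>n. p n * step_approx h y0 w m (real n / \<psi>)) = step_sum h y0 w m (\<lambda>a. F (\<psi> * a))"
    using sums_step_approx_scaled[OF \<psi> w, of h y0 m] by (simp_all add: sums_iff)
  have diff: "(\<Sum>n. p n * h (real n / \<psi>)) - step_sum h y0 w m (\<lambda>a. F (\<psi> * a)) = suminf D"
    unfolding D_def step(2)[symmetric] using summable_h step(1) by (rule suminf_diff)
  have summable_g: "summable g" using g by (rule sums_summable)
  have summable_norm_D: "summable (\<lambda>n. norm (D n))"
    using D_le by (intro summable_comparison_test'[OF summable_g]) simp
  have "norm (suminf D) \<le> (\<Sum>n. norm (D n))"
    using summable_norm_D by (rule summable_norm)
  also have "\<dots> \<le> suminf g"
    using summable_norm_D summable_g D_le by (intro suminf_le) auto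
  finally show ?thesis
    using g diff by (simp add: sums_iff)
qed

end

context offspring_law
begin

lemma eventually_scaled_series_close:
  fixes \<psi> c :: "nat \<Rightarrow> real" and h :: "real \<Rightarrow> real"
  assumes \<alpha>: "\<alpha> > 0" and \<psi>: "\<forall>\<^sub>F k in sequentially. \<psi> k > 0" and c: "\<And>k. c k \<ge> 0"
    and tail_lim: "\<And>y. y > 0 \<Longrightarrow> ((\<lambda>k. c k * F (\<psi> k * y)) \<longlongrightarrow> y powr (-\<alpha>)) sequentially"
    and y0: "y0 > 0" and w: "w > 0" and e: "e > 0" and M: "M = y0 + real m * w"
    and uc: "\<And>x x'. 0 \<le> x \<Longrightarrow> x \<le> M \<Longrightarrow> 0 \<le> x' \<Longrightarrow> x' \<le> M \<Longrightarrow> \<bar>x - x'\<bar> \<le> w \<Longrightarrow> \<bar>h x - h x'\<bar> \<le> e"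
    and vanish: "\<And>x. 0 \<le> x \<Longrightarrow> x \<le> y0 \<Longrightarrow> h x = 0"
    and bounded: "\<And>x. 0 \<le> x \<Longrightarrow> \<bar>h x\<bar> \<le> 1"
    and cont: "continuous_on {0<..} h"
  shows "\<forall>\<^sub>F k in sequentially.
           \<bar>c k * (\<Sum>n. p n * h (real n / \<psi> k)) - \<alpha> * (LBINT x:{0<..}. h x * x powr (-\<alpha> - 1))\<bar>
           < 2 * (e * y0 powr (-\<alpha>) + M powr (-\<alpha>)) + 2 * e"
proof -
  have grid_pos: "y0 + (real j - 1) * w > 0" "y0 + real j * w > 0" if "j \<in> {1..m}" for j
    using that y0 w by (smt (verit) atLeastAtMost_iff mult_nonneg_nonneg of_nat_1 of_nat_le_iff)+
  have "M > 0" using M y0 w by (smt (verit) mult_nonneg_nonneg of_nat_0_le_iff)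
  have "c k * step_sum h y0 w m (\<lambda>a. F (\<psi> k * a)) = step_sum h y0 w m (\<lambda>a. c k * F (\<psi> k * a))" for k
    by (simp add: step_sum_def sum_distrib_left algebra_simps)
  moreover have "((\<lambda>k. step_sum h y0 w m (\<lambda>a. c k * F (\<psi> k * a)))
      \<longlongrightarrow> step_sum h y0 w m (\<lambda>a. a powr (-\<alpha>))) sequentially"
    unfolding step_sum_def using grid_pos
    by (intro tendsto_sum tendsto_mult tendsto_const tendsto_diff tail_lim) auto
  ultimately have close_step: "\<forall>\<^sub>F k in sequentially.
      \<bar>c k * step_sum h y0 w m (\<lambda>a. F (\<psi> k * a)) - step_sum h y0 w m (\<lambda>a. a powr (-\<alpha>))\<bar> < e"
    using e by (simp add: tendsto_iff dist_real_def)
  have "((\<lambda>k. e * (c k * F (\<psi> k * y0)) + c k * F (\<psi> k * M))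
      \<longlongrightarrow> e * y0 powr (-\<alpha>) + M powr (-\<alpha>)) sequentially"
    using y0 \<open>M > 0\<close> by (intro tendsto_add tendsto_mult tendsto_const tail_lim)
  then have close_error: "\<forall>\<^sub>F k in sequentially.
      c k * (e * F (\<psi> k * y0) + F (\<psi> k * M)) < e * y0 powr (-\<alpha>) + M powr (-\<alpha>) + e"
    using e by (intro order_tendstoD) (auto simp: algebra_simps)
  have integral_error: "\<bar>\<alpha> * (LBINT x:{0<..}. h x * x powr (-\<alpha> - 1)) - step_sum h y0 w m (\<lambda>a. a powr (-\<alpha>))\<bar>
      \<le> e * y0 powr (-\<alpha>) + M powr (-\<alpha>)"
    by (rule integral_step_approx_error[OF \<alpha> y0 w _ M]) (use e uc vanish bounded cont in auto)
  have triangle: "\<bar>X - I\<bar> < 2 * (e * a + b) + 2 * e"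
    if "\<bar>X - Y\<bar> \<le> C" "\<bar>Y - Z\<bar> < e" "C < e * a + b + e" "\<bar>I - Z\<bar> \<le> e * a + b"
    for X Y Z I C a b :: real
    using that by (smt (verit))
  show ?thesis
    using close_step close_error \<psi>
  proof eventually_elim
    case (elim k)
    have "\<bar>c k * (\<Sum>n. p n * h (real n / \<psi> k)) - c k * step_sum h y0 w m (\<lambda>a. F (\<psi> k * a))\<bar>
        = c k * \<bar>(\<Sum>n. p n * h (real n / \<psi> k)) - step_sum h y0 w m (\<lambda>a. F (\<psi> k * a))\<bar>"
      using c[of k] by (simp add: abs_mult flip: right_diff_distrib)
    also have "\<dots> \<le> c k * (e * F (\<psi> k * y0) + F (\<psi> k * M))"
      using series_step_approx_error[OF elim(3) y0 w less_imp_le[OF e] M uc vanish bounded] c[of k]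
      by (intro mult_left_mono) auto
    finally show ?case
      using elim(1,2) integral_error by (rule triangle)
  qed
qed

lemma tendsto_scaled_series:
  fixes \<psi> c :: "nat \<Rightarrow> real" and h :: "real \<Rightarrow> real"
  assumes \<alpha>: "\<alpha> > 0" and \<psi>: "\<forall>\<^sub>F k in sequentially. \<psi> k > 0" and c: "\<And>k. c k \<ge> 0"
    and tail_lim: "\<And>y. y > 0 \<Longrightarrow> ((\<lambda>k. c k * F (\<psi> k * y)) \<longlongrightarrow> y powr (-\<alpha>)) sequentially"
    and cont: "continuous_on {0..} h" and bounded: "\<And>x. 0 \<le> x \<Longrightarrow> \<bar>h x\<bar> \<le> 1"
    and \<delta>: "\<delta> > 0" and vanish: "\<And>x. 0 \<le> x \<Longrightarrow> x < \<delta> \<Longrightarrow> h x = 0"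
  shows "((\<lambda>k. c k * (\<Sum>n. p n * h (real n / \<psi> k))) \<longlongrightarrow> \<alpha> * (LBINT x:{0<..}. h x * x powr (-\<alpha> - 1)))
           sequentially"
  unfolding tendsto_iff dist_real_def
proof (intro allI impI)
  fix \<epsilon> :: real assume "\<epsilon> > 0"
  define y0 where "y0 = \<delta> / 2"
  have y0: "y0 > 0" "y0 < \<delta>" using \<delta> by (auto simp: y0_def)
  define e where "e = \<epsilon> / (2 * y0 powr (-\<alpha>) + 4)"
  have "2 * y0 powr (-\<alpha>) + 4 > 0"
    by (simp add: add_nonneg_pos)
  then have e: "e > 0" "e * (2 * y0 powr (-\<alpha>) + 4) = \<epsilon>"
    using \<open>\<epsilon> > 0\<close> by (simp_all add: e_def)
  have "((\<lambda>x. x powr (-\<alpha>)) \<longlongrightarrow> 0) at_top"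
    using \<alpha> by (intro tendsto_neg_powr filterlim_ident) auto
  then have "\<forall>\<^sub>F x in at_top. x powr (-\<alpha>) < e \<and> x \<ge> y0 + 1"
    using e by (intro eventually_conj order_tendstoD) (auto simp: eventually_ge_at_top)
  then obtain M where M: "M powr (-\<alpha>) < e" "M \<ge> y0 + 1"
    by (auto simp: eventually_at_top_linorder)
  have "uniformly_continuous_on {0..M} h"
    by (rule compact_uniformly_continuous[OF continuous_on_subset[OF cont]]) auto
  then obtain d where d: "d > 0"
    and close: "\<And>x x'. x \<in> {0..M} \<Longrightarrow> x' \<in> {0..M} \<Longrightarrow> dist x' x < d \<Longrightarrow> dist (h x') (h x) < e"
    unfolding uniformly_continuous_on_def using e by metis
  define m where "m = nat \<lceil>(M - y0) / d\<rceil> + 1"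
  have m: "real m > (M - y0) / d" "m \<ge> 1" unfolding m_def by linarith+
  define w where "w = (M - y0) / real m"
  have w: "w > 0" "w < d" "M = y0 + real m * w"
    using M m d by (auto simp: w_def field_simps)
  have "\<forall>\<^sub>F k in sequentially.
      \<bar>c k * (\<Sum>n. p n * h (real n / \<psi> k)) - \<alpha> * (LBINT x:{0<..}. h x * x powr (-\<alpha> - 1))\<bar>
      < 2 * (e * y0 powr (-\<alpha>) + M powr (-\<alpha>)) + 2 * e"
  proof (rule eventually_scaled_series_close[OF \<alpha> \<psi> c tail_lim y0(1) w(1) e(1) w(3)])
    show "\<bar>h x - h x'\<bar> \<le> e" if "0 \<le> x" "x \<le> M" "0 \<le> x'" "x' \<le> M" "\<bar>x - x'\<bar> \<le> w" for x x'
      using close[of x' x] that w by (auto simp: dist_real_def)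
    show "continuous_on {0<..} h"
      using cont by (rule continuous_on_subset) auto
  qed (use vanish y0 bounded in auto)
  moreover have "2 * (e * y0 powr (-\<alpha>) + M powr (-\<alpha>)) + 2 * e < \<epsilon>"
    using M(1) e by (simp add: algebra_simps)
  ultimately show "\<forall>\<^sub>F k in sequentially.
      \<bar>c k * (\<Sum>n. p n * h (real n / \<psi> k)) - \<alpha> * (LBINT x:{0<..}. h x * x powr (-\<alpha> - 1))\<bar> < \<epsilon>"
    by (auto elim: eventually_mono)
qed

end

context offspring_law
begin

lemma summable_p_mult_bounded:
  assumes "\<And>n. \<bar>b n\<bar> \<le> 1"
  shows "summable (\<lambda>n. p n * b n)"
  by (rule summable_comparison_test'[OF summable_p])
     (use assms p_nonneg in \<open>auto simp: abs_mult intro: mult_left_le\<close>)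

end

section \<open>Asymptotics of the Laplace functional\<close>

locale gw_heavy_tail = regularly_varying_tail p \<alpha> l for p \<alpha> l +
  fixes \<phi> f :: "real \<Rightarrow> real" and a :: real
  assumes p_crit: "(\<lambda>n. real n * p n) sums 1"
    and p_nondeg: "p 1 \<noteq> 1"
    and alpha: "\<alpha> > 2"
    and phi_inv: "((\<lambda>\<epsilon>. Fbar p (\<phi> \<epsilon>) / \<epsilon>) \<longlongrightarrow> 1) (at_right 0)"
    and f_cont: "continuous_on {0..} f"
    and f_nonneg: "\<And>x. x \<ge> 0 \<Longrightarrow> f x \<ge> 0"
    and f_zero: "\<exists>\<delta>>0. \<forall>x. 0 \<le> x \<and> x < \<delta> \<longrightarrow> f x = 0"
    and a_nonneg: "a \<ge> 0"
begin

sublocale critical_offspring_law p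
  using p_crit p_nondeg summable_second_moment[OF alpha] by unfold_locales

definition scale :: "nat \<Rightarrow> real" where
  "scale k = \<phi> (1 / real k ^ 2)"

lemma tendsto_k2_Fbar_scale: "((\<lambda>k. real k ^ 2 * F (scale k)) \<longlongrightarrow> 1) sequentially"
proof -
  have "filterlim (\<lambda>k::nat. 1 / real k ^ 2) (at_right 0) sequentially"
    by real_asymp
  then have "((\<lambda>k. F (\<phi> (1 / real k ^ 2)) / (1 / real k ^ 2)) \<longlongrightarrow> 1) sequentially"
    by (rule filterlim_compose[OF phi_inv])
  then show ?thesis
    by (simp add: scale_def mult.commute)
qed

lemma filterlim_scale_at_top: "filterlim scale at_top sequentially"
  unfolding filterlim_at_top
proof
  fix Z :: real
  have "((\<lambda>k. (real k ^ 2 * F (scale k)) * (1 / real k ^ 2)) \<longlongrightarrow> 1 * 0) sequentially"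
    by (intro tendsto_mult tendsto_k2_Fbar_scale) real_asymp
  moreover have "\<forall>\<^sub>F k in sequentially. (real k ^ 2 * F (scale k)) * (1 / real k ^ 2) = F (scale k)"
    using eventually_gt_at_top[of "0::nat"] by eventually_elim simp
  ultimately have "(\<lambda>k. F (scale k)) \<longlonglongrightarrow> 0"
    by (simp add: tendsto_cong)
  then have "\<forall>\<^sub>F k in sequentially. F (scale k) < F Z"
    using Fbar_pos by (intro order_tendstoD) auto
  then show "\<forall>\<^sub>F k in sequentially. Z \<le> scale k"
  proof eventually_elim
    case (elim k)
    then show ?case using Fbar_antimono[of "scale k" Z] by linarith
  qed
qed

lemma eventually_scale_pos: "\<forall>\<^sub>F k in sequentially. scale k > 0"
  using filterlim_scale_at_top by (simp add: filterlim_at_top_dense)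

lemma tendsto_k2_Fbar_scale_mult:
  assumes "y > 0"
  shows "((\<lambda>k. real k ^ 2 * F (scale k * y)) \<longlongrightarrow> y powr (-\<alpha>)) sequentially"
proof -
  have "((\<lambda>k. F (y * scale k) / F (scale k)) \<longlongrightarrow> y powr (-\<alpha>)) sequentially"
    using filterlim_compose[OF tendsto_Fbar_ratio[OF assms] filterlim_scale_at_top] by (simp add: o_def)
  then have "((\<lambda>k. (real k ^ 2 * F (scale k)) * (F (y * scale k) / F (scale k))) \<longlongrightarrow> 1 * y powr (-\<alpha>))
      sequentially"
    by (intro tendsto_mult tendsto_k2_Fbar_scale)
  moreover have "(real k ^ 2 * F (scale k)) * (F (y * scale k) / F (scale k)) = real k ^ 2 * F (scale k * y)" for k
    using Fbar_pos[of "scale k"] by (simp add: mult.commute)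
  ultimately show ?thesis by simp
qed

text \<open>This is where the finite variance enters: \<open>x\<^sup>2 F x \<rightarrow> 0\<close> makes the scale negligible
  against \<open>k\<close>.\<close>

lemma tendsto_scale_over_k_0: "((\<lambda>k. scale k / real k) \<longlongrightarrow> 0) sequentially"
proof -
  have "((\<lambda>k. scale k ^ 2 * F (scale k)) \<longlongrightarrow> 0) sequentially"
    using filterlim_compose[OF tendsto_square_Fbar_0[OF second_moment] filterlim_scale_at_top]
    by (simp add: o_def)
  then have "((\<lambda>k. (scale k ^ 2 * F (scale k)) / (real k ^ 2 * F (scale k))) \<longlongrightarrow> 0 / 1) sequentially"
    by (intro tendsto_divide tendsto_k2_Fbar_scale) auto
  moreover have "(scale k ^ 2 * F (scale k)) / (real k ^ 2 * F (scale k)) = (scale k / real k) ^ 2" for k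
    using Fbar_pos[of "scale k"] by (simp add: power_divide)
  ultimately have "((\<lambda>k. (scale k / real k) ^ 2) \<longlongrightarrow> 0) sequentially"
    by simp
  then have "((\<lambda>k. sqrt ((scale k / real k) ^ 2)) \<longlongrightarrow> sqrt 0) sequentially"
    by (rule tendsto_real_sqrt)
  then have "((\<lambda>k. \<bar>scale k / real k\<bar>) \<longlongrightarrow> 0) sequentially"
    by (simp only: real_sqrt_abs real_sqrt_zero)
  then show ?thesis by (rule tendsto_rabs_zero_cancel)
qed

lemma tendsto_k2_exp_minus_1: "((\<lambda>k. real k ^ 2 * (exp (a / real k ^ 2) - 1)) \<longlongrightarrow> a) sequentially"
proof (cases "a = 0")
  case False
  then have "a > 0" using a_nonneg by simp
  then show ?thesis by real_asymp
qed simp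

end

context gw_heavy_tail
begin

definition delta :: real where
  "delta = (SOME \<delta>. \<delta> > 0 \<and> (\<forall>x. 0 \<le> x \<and> x < \<delta> \<longrightarrow> f x = 0))"

lemma delta: "delta > 0" "\<And>x. 0 \<le> x \<Longrightarrow> x < delta \<Longrightarrow> f x = 0"
  using someI_ex[OF f_zero] unfolding delta_def[symmetric] by auto

definition hf :: "real \<Rightarrow> real" where
  "hf x = 1 - exp (- f x)"

lemma hf_bounds: "x \<ge> 0 \<Longrightarrow> 0 \<le> hf x \<and> hf x \<le> 1"
  using f_nonneg[of x] by (simp add: hf_def)

definition u :: "nat \<Rightarrow> real" where
  "u k = gw_laplace p (- a / real k ^ 2) (\<lambda>n. f (real n / scale k))"

definition Eh :: "nat \<Rightarrow> real" where
  "Eh k = (\<Sum>n. p n * hf (real n / scale k))"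

definition Dh :: "nat \<Rightarrow> real" where
  "Dh k = (\<Sum>n. p n * hf (real n / scale k) * u k ^ n)"

lemma Lbar_eq: "Lbar p a f \<phi> k = 1 - u k"
  by (simp add: Lbar_def u_def gw_laplace_def gw_laplace_term_def[abs_def] scale_def)

context
  fixes k :: nat
  assumes scale_pos: "scale k > 0"
begin

lemma u_bounds: "0 \<le> u k" "u k \<le> 1"
  using gw_laplace_nonneg gw_laplace_summable_le_1(2) a_nonneg f_nonneg scale_pos
  unfolding u_def by auto

lemma hf_scaled_bounds: "0 \<le> hf (real n / scale k) \<and> hf (real n / scale k) \<le> 1"
  using hf_bounds scale_pos by simp

lemma summable_hf_scaled:
  shows "summable (\<lambda>n. p n * hf (real n / scale k))"
    and "summable (\<lambda>n. p n * hf (real n / scale k) * u k ^ n)"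
  using hf_scaled_bounds u_bounds
  by (auto simp: mult.assoc abs_le_iff intro!: summable_p_mult_bounded mult_le_one power_le_one)

lemma exp_mult_u_eq: "exp (a / real k ^ 2) * u k = (\<Sum>n. p n * u k ^ n) - Dh k"
proof -
  define b where "b = (\<lambda>n. exp (- a / real k ^ 2 - f (real n / scale k)) * u k ^ n)"
  have "0 \<le> a / real k ^ 2" using a_nonneg by simp
  then have "\<bar>b n\<bar> \<le> 1" for n
    using u_bounds f_nonneg[of "real n / scale k"] scale_pos
    by (auto simp: b_def abs_mult intro!: mult_le_one power_le_one)
  then have summable: "summable (\<lambda>n. p n * b n)"
    by (rule summable_p_mult_bounded)
  have "u k = (\<Sum>n. p n * b n)"
    unfolding u_def b_def using a_nonneg f_nonneg scale_pos
    by (subst gw_laplace_fixpoint) (auto simp: mult.assoc)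
  then have "exp (a / real k ^ 2) * u k = (\<Sum>n. exp (a / real k ^ 2) * (p n * b n))"
    using summable by (simp add: suminf_mult)
  also have "\<dots> = (\<Sum>n. p n * u k ^ n - p n * hf (real n / scale k) * u k ^ n)"
    by (intro suminf_cong) (simp add: b_def hf_def exp_diff exp_minus field_simps)
  also have "\<dots> = (\<Sum>n. p n * u k ^ n) - Dh k"
    unfolding Dh_def using u_bounds summable_hf_scaled(2)
    by (intro suminf_diff[symmetric] summable_p_mult_bounded) (auto simp: power_le_one)
  finally show ?thesis .
qed

lemma remainder_equation:
  "(real k * (1 - u k)) ^ 2 * pgf_remainder (1 - u k)
     = real k ^ 2 * (exp (a / real k ^ 2) - 1) * u k + real k ^ 2 * Dh k"
proof -
  have "(1 - u k) ^ 2 * pgf_remainder (1 - u k) = (\<Sum>n. p n * u k ^ n) - 1 + (1 - u k)"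
    using pgf_eq_remainder[of "1 - u k"] u_bounds by simp
  also have "\<dots> = (exp (a / real k ^ 2) - 1) * u k + Dh k"
    using exp_mult_u_eq by (simp add: algebra_simps)
  finally have "real k ^ 2 * ((1 - u k) ^ 2 * pgf_remainder (1 - u k))
      = real k ^ 2 * ((exp (a / real k ^ 2) - 1) * u k + Dh k)"
    by simp
  then show ?thesis
    unfolding power_mult_distrib by (simp add: algebra_simps)
qed

lemma Dh_le_Eh: "Dh k \<le> Eh k"
  unfolding Dh_def Eh_def using summable_hf_scaled hf_scaled_bounds u_bounds p_nonneg
  by (intro suminf_le) (auto intro!: mult_left_le power_le_one)

text \<open>Since \<open>hf\<close> vanishes near \<open>0\<close>, only individuals with more than \<open>scale k * delta / 2\<close>
  children contribute to \<open>Eh k - Dh k\<close>; below \<open>scale k * M'\<close> children Bernoulli's inequality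
  bounds \<open>1 - u k ^ n\<close> by \<open>n (1 - u k)\<close>.\<close>

lemma hf_gap_le:
  assumes "M' > 0"
  shows "p n * hf (real n / scale k) * (1 - u k ^ n)
    \<le> M' * scale k * (1 - u k) * (if real n > scale k * (delta / 2) then p n else 0)
      + (if real n > scale k * M' then p n else 0)"
proof -
  have gap_nonneg: "0 \<le> 1 - u k ^ n"
    using u_bounds by (simp add: power_le_one)
  have "1 + real n * (- (1 - u k)) \<le> (1 + - (1 - u k)) ^ n"
    using u_bounds by (intro Bernoulli_inequality) simp
  then have gap_le: "1 - u k ^ n \<le> real n * (1 - u k)"
    by (simp add: algebra_simps)
  have hf_le: "p n * hf (real n / scale k) \<le> p n"
    using hf_scaled_bounds p_nonneg by (simp add: mult_left_le)
  have first_nonneg: "0 \<le> M' * scale k * (1 - u k) * (if real n > scale k * (delta / 2) then p n else 0)"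
    using assms scale_pos u_bounds p_nonneg by simp
  show ?thesis
  proof (cases "real n / scale k < delta")
    case True
    then have "hf (real n / scale k) = 0" using delta scale_pos by (simp add: hf_def)
    then show ?thesis using first_nonneg p_nonneg by simp
  next
    case False
    then have "real n \<ge> delta * scale k"
      using scale_pos by (simp add: field_simps)
    moreover have "delta * scale k > 0"
      using delta(1) scale_pos by simp
    ultimately have n: "real n > scale k * (delta / 2)"
      by (simp add: algebra_simps)
    show ?thesis
    proof (cases "real n > scale k * M'")
      case True
      have "p n * hf (real n / scale k) * (1 - u k ^ n) \<le> p n * hf (real n / scale k)"
        using gap_nonneg u_bounds hf_scaled_bounds p_nonneg by (intro mult_left_le) auto
      then show ?thesis using True first_nonneg hf_le by simp
    next
      case False
      have "real n * (1 - u k) \<le> scale k * M' * (1 - u k)"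
        using False u_bounds by (intro mult_right_mono) auto
      then have "1 - u k ^ n \<le> M' * scale k * (1 - u k)"
        using gap_le by (simp add: mult.commute)
      then have "p n * hf (real n / scale k) * (1 - u k ^ n) \<le> p n * (M' * scale k * (1 - u k))"
        by (rule mult_mono[OF hf_le]) (use gap_nonneg p_nonneg in auto)
      then show ?thesis using False n by (simp add: algebra_simps)
    qed
  qed
qed

lemma Eh_minus_Dh_le:
  assumes "M' > 0"
  shows "Eh k - Dh k \<le> M' * scale k * (1 - u k) * F (scale k * (delta / 2)) + F (scale k * M')"
proof -
  define g where "g = (\<lambda>n. M' * scale k * (1 - u k) * (if real n > scale k * (delta / 2) then p n else 0)
                      + (if real n > scale k * M' then p n else 0))"
  have summable_g: "summable g"
    unfolding g_def by (intro summable_add summable_mult summable_Fbar_terms)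
  have "Eh k - Dh k = (\<Sum>n. p n * hf (real n / scale k) - p n * hf (real n / scale k) * u k ^ n)"
    unfolding Eh_def Dh_def using summable_hf_scaled by (rule suminf_diff)
  also have "\<dots> = (\<Sum>n. p n * hf (real n / scale k) * (1 - u k ^ n))"
    by (simp add: algebra_simps)
  also have "\<dots> \<le> suminf g"
    unfolding g_def using hf_gap_le[OF assms] summable_g summable_hf_scaled
    by (intro suminf_le) (auto simp: g_def algebra_simps intro: summable_diff)
  also have "\<dots> = (\<Sum>n. M' * scale k * (1 - u k) * (if real n > scale k * (delta / 2) then p n else 0))
      + (\<Sum>n. if real n > scale k * M' then p n else 0)"
    unfolding g_def by (intro suminf_add[symmetric] summable_mult summable_Fbar_terms)
  also have "\<dots> = M' * scale k * (1 - u k) * F (scale k * (delta / 2)) + F (scale k * M')"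
    unfolding Fbar_def by (simp only: suminf_mult[OF summable_Fbar_terms])
  finally show ?thesis .
qed

end

end

context gw_heavy_tail
begin

lemma tendsto_k2_Eh:
  "((\<lambda>k. real k ^ 2 * Eh k) \<longlongrightarrow> \<alpha> * (LBINT x:{0<..}. hf x * x powr (-\<alpha> - 1))) sequentially"
  unfolding Eh_def
proof (rule tendsto_scaled_series[OF _ eventually_scale_pos _ tendsto_k2_Fbar_scale_mult _ _ delta(1)])
  show "continuous_on {0..} hf"
    unfolding hf_def by (intro continuous_intros f_cont)
qed (use alpha hf_bounds delta(2) in \<open>auto simp: hf_def\<close>)

lemma eventually_k_L_bounded:
  obtains K where "\<forall>\<^sub>F k in sequentially. 0 \<le> real k * (1 - u k) \<and> real k * (1 - u k) \<le> K"
proof -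
  define I where "I = \<alpha> * (LBINT x:{0<..}. hf x * x powr (-\<alpha> - 1))"
  obtain c0 where c0: "c0 > 0" "\<And>x. 0 \<le> x \<and> x \<le> 1 \<Longrightarrow> c0 \<le> pgf_remainder x"
    using pgf_remainder_lower_bound by blast
  have "((\<lambda>k. real k ^ 2 * (exp (a / real k ^ 2) - 1) + real k ^ 2 * Eh k) \<longlongrightarrow> a + I) sequentially"
    unfolding I_def by (intro tendsto_add tendsto_k2_exp_minus_1 tendsto_k2_Eh)
  then have "\<forall>\<^sub>F k in sequentially. real k ^ 2 * (exp (a / real k ^ 2) - 1) + real k ^ 2 * Eh k < a + I + 1"
    by (intro order_tendstoD) auto
  then have "\<forall>\<^sub>F k in sequentially. 0 \<le> real k * (1 - u k) \<and> real k * (1 - u k) \<le> sqrt ((a + I + 1) / c0)"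
    using eventually_scale_pos
  proof eventually_elim
    case (elim k)
    have "c0 * (real k * (1 - u k)) ^ 2 \<le> pgf_remainder (1 - u k) * (real k * (1 - u k)) ^ 2"
      using c0(2)[of "1 - u k"] u_bounds[OF elim(2)] by (intro mult_right_mono) auto
    also have "\<dots> = (real k * (1 - u k)) ^ 2 * pgf_remainder (1 - u k)"
      by (rule mult.commute)
    also have "\<dots> \<le> real k ^ 2 * (exp (a / real k ^ 2) - 1) + real k ^ 2 * Eh k"
      unfolding remainder_equation[OF elim(2)]
      using u_bounds[OF elim(2)] Dh_le_Eh[OF elim(2)] a_nonneg
      by (intro add_mono mult_left_le mult_left_mono) auto
    finally have "(real k * (1 - u k)) ^ 2 \<le> (a + I + 1) / c0"
      using elim(1) c0(1) by (simp add: field_simps)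
    then have "sqrt ((real k * (1 - u k)) ^ 2) \<le> sqrt ((a + I + 1) / c0)"
      by (rule real_sqrt_le_mono)
    then show ?case using u_bounds[OF elim(2)] by simp
  qed
  then show ?thesis by (rule that)
qed

lemma tendsto_L_0: "((\<lambda>k. 1 - u k) \<longlongrightarrow> 0) sequentially"
  and tendsto_scale_L_0: "((\<lambda>k. scale k * (1 - u k)) \<longlongrightarrow> 0) sequentially"
proof -
  obtain K where K: "\<forall>\<^sub>F k in sequentially. 0 \<le> real k * (1 - u k) \<and> real k * (1 - u k) \<le> K"
    by (rule eventually_k_L_bounded)
  show "((\<lambda>k. 1 - u k) \<longlongrightarrow> 0) sequentially"
  proof (rule tendsto_sandwich[of "\<lambda>_. 0" _ _ "\<lambda>k. K / real k"])
    show "\<forall>\<^sub>F k in sequentially. 0 \<le> 1 - u k"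
      using K eventually_gt_at_top[of "0::nat"] by eventually_elim (simp add: zero_le_mult_iff)
    show "\<forall>\<^sub>F k in sequentially. 1 - u k \<le> K / real k"
      using K eventually_gt_at_top[of "0::nat"] by eventually_elim (simp add: field_simps)
    show "((\<lambda>k. K / real k) \<longlongrightarrow> 0) sequentially"
      by real_asymp
  qed simp
  show "((\<lambda>k. scale k * (1 - u k)) \<longlongrightarrow> 0) sequentially"
  proof (rule tendsto_sandwich[of "\<lambda>_. 0" _ _ "\<lambda>k. scale k / real k * K"])
    show "\<forall>\<^sub>F k in sequentially. 0 \<le> scale k * (1 - u k)"
      using eventually_scale_pos by eventually_elim (simp add: u_bounds)
    show "\<forall>\<^sub>F k in sequentially. scale k * (1 - u k) \<le> scale k / real k * K"
      using K eventually_scale_pos eventually_gt_at_top[of "0::nat"]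
    proof eventually_elim
      case (elim k)
      have "scale k * (1 - u k) = scale k / real k * (real k * (1 - u k))" using elim by simp
      also have "\<dots> \<le> scale k / real k * K" using elim by (intro mult_left_mono) auto
      finally show ?case .
    qed
    show "((\<lambda>k. scale k / real k * K) \<longlongrightarrow> 0) sequentially"
      using tendsto_mult[OF tendsto_scale_over_k_0 tendsto_const[of K]] by simp
  qed simp
qed

lemma tendsto_k2_Eh_minus_Dh_0: "((\<lambda>k. real k ^ 2 * (Eh k - Dh k)) \<longlongrightarrow> 0) sequentially"
  unfolding tendsto_iff dist_real_def
proof (intro allI impI)
  fix \<epsilon> :: real assume "\<epsilon> > 0"
  have "((\<lambda>x. x powr (-\<alpha>)) \<longlongrightarrow> 0) at_top"
    using alpha by (intro tendsto_neg_powr filterlim_ident) auto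
  then have "\<forall>\<^sub>F x in at_top. x powr (-\<alpha>) < \<epsilon> / 2 \<and> x \<ge> 1"
    using \<open>\<epsilon> > 0\<close> by (intro eventually_conj order_tendstoD) (auto simp: eventually_ge_at_top)
  then obtain M' where M': "M' powr (-\<alpha>) < \<epsilon> / 2" "M' \<ge> 1"
    by (auto simp: eventually_at_top_linorder)
  have "((\<lambda>k. M' * (scale k * (1 - u k)) * (real k ^ 2 * F (scale k * (delta / 2)))
              + real k ^ 2 * F (scale k * M'))
        \<longlongrightarrow> M' * 0 * (delta / 2) powr (-\<alpha>) + M' powr (-\<alpha>)) sequentially"
    using delta(1) M' by (intro tendsto_add tendsto_mult tendsto_const tendsto_scale_L_0
        tendsto_k2_Fbar_scale_mult) auto
  moreover have "M' * 0 * (delta / 2) powr (-\<alpha>) + M' powr (-\<alpha>) < \<epsilon>"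
    using M' \<open>\<epsilon> > 0\<close> by simp
  ultimately have "\<forall>\<^sub>F k in sequentially. M' * (scale k * (1 - u k)) * (real k ^ 2 * F (scale k * (delta / 2)))
      + real k ^ 2 * F (scale k * M') < \<epsilon>"
    by (rule order_tendstoD(2))
  then show "\<forall>\<^sub>F k in sequentially. \<bar>real k ^ 2 * (Eh k - Dh k) - 0\<bar> < \<epsilon>"
    using eventually_scale_pos
  proof eventually_elim
    case (elim k)
    have "real k ^ 2 * (Eh k - Dh k)
        \<le> real k ^ 2 * (M' * scale k * (1 - u k) * F (scale k * (delta / 2)) + F (scale k * M'))"
      using Eh_minus_Dh_le[OF elim(2)] M' by (intro mult_left_mono) auto
    also have "\<dots> < \<epsilon>" using elim(1) by (simp add: algebra_simps)
    finally show ?case using Dh_le_Eh[OF elim(2)] by simp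
  qed
qed

lemma tendsto_k_Lbar:
  "((\<lambda>k. real k * Lbar p a f \<phi> k) \<longlongrightarrow>
      sqrt 2 / gw_sigma p * sqrt (a + \<alpha> * (LBINT x:{0<..}. hf x * x powr (-\<alpha> - 1)))) sequentially"
proof -
  define I where "I = \<alpha> * (LBINT x:{0<..}. hf x * x powr (-\<alpha> - 1))"
  define R0 where "R0 = pgf_remainder 0"
  have R0: "R0 > 0" "R0 = gw_sigma p ^ 2 / 2"
    using variance_pos pgf_remainder_0 by (simp_all add: R0_def gw_sigma_def)
  have "((\<lambda>k. real k ^ 2 * Eh k - real k ^ 2 * (Eh k - Dh k)) \<longlongrightarrow> I - 0) sequentially"
    unfolding I_def by (intro tendsto_diff tendsto_k2_Eh tendsto_k2_Eh_minus_Dh_0)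
  then have "((\<lambda>k. real k ^ 2 * Dh k) \<longlongrightarrow> I) sequentially"
    by (simp add: right_diff_distrib)
  moreover have "(u \<longlongrightarrow> 1) sequentially"
    using tendsto_diff[OF tendsto_const[of 1] tendsto_L_0] by simp
  ultimately have rhs: "((\<lambda>k. real k ^ 2 * (exp (a / real k ^ 2) - 1) * u k + real k ^ 2 * Dh k)
      \<longlongrightarrow> a * 1 + I) sequentially"
    by (intro tendsto_add tendsto_mult tendsto_k2_exp_minus_1)
  have "\<forall>\<^sub>F k in sequentially. 1 - u k \<in> {0..}"
    using eventually_scale_pos by eventually_elim (simp add: u_bounds)
  then have "((\<lambda>k. pgf_remainder (1 - u k)) \<longlongrightarrow> R0) sequentially"
    unfolding R0_def by (rule continuous_within_tendsto_compose[OF pgf_remainder_continuous _ tendsto_L_0])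
  then have "((\<lambda>k. (real k ^ 2 * (exp (a / real k ^ 2) - 1) * u k + real k ^ 2 * Dh k)
      / pgf_remainder (1 - u k)) \<longlongrightarrow> (a * 1 + I) / R0) sequentially"
    using rhs R0(1) by (intro tendsto_divide) auto
  moreover have "\<forall>\<^sub>F k in sequentially. (real k ^ 2 * (exp (a / real k ^ 2) - 1) * u k + real k ^ 2 * Dh k)
      / pgf_remainder (1 - u k) = (real k * Lbar p a f \<phi> k) ^ 2"
    using eventually_scale_pos
  proof eventually_elim
    case (elim k)
    obtain c0 where "c0 > 0" "\<And>x. 0 \<le> x \<and> x \<le> 1 \<Longrightarrow> c0 \<le> pgf_remainder x"
      using pgf_remainder_lower_bound by blast
    then have "pgf_remainder (1 - u k) \<noteq> 0"
      using u_bounds[OF elim] by (smt (verit))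
    then show ?case
      unfolding Lbar_eq remainder_equation[OF elim, symmetric] by simp
  qed
  ultimately have "((\<lambda>k. (real k * Lbar p a f \<phi> k) ^ 2) \<longlongrightarrow> (a + I) / R0) sequentially"
    by (simp add: tendsto_cong)
  then have "((\<lambda>k. sqrt ((real k * Lbar p a f \<phi> k) ^ 2)) \<longlongrightarrow> sqrt ((a + I) / R0)) sequentially"
    by (rule tendsto_real_sqrt)
  moreover have "\<forall>\<^sub>F k in sequentially. sqrt ((real k * Lbar p a f \<phi> k) ^ 2) = real k * Lbar p a f \<phi> k"
    using eventually_scale_pos by eventually_elim (simp add: Lbar_eq u_bounds)
  moreover have "sqrt ((a + I) / R0) = sqrt 2 / gw_sigma p * sqrt (a + I)"
  proof -
    have "gw_sigma p > 0" using variance_pos by (simp add: gw_sigma_def)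
    moreover have "(a + I) / R0 = 2 * (a + I) / gw_sigma p ^ 2" unfolding R0(2) by simp
    ultimately show ?thesis
      by (simp only: real_sqrt_divide real_sqrt_mult real_sqrt_abs abs_of_pos) simp
  qed
  ultimately show ?thesis
    unfolding I_def by (simp add: tendsto_cong)
qed

end

theorem lemma2:
  fixes p :: "nat \<Rightarrow> real" and \<alpha> a :: real and l \<phi> f :: "real \<Rightarrow> real"
  assumes p_nonneg: "\<And>n. p n \<ge> 0"
    and p_prob: "p sums 1"
    and p_crit: "(\<lambda>n. real n * p n) sums 1"
    and p_nondeg: "p 1 \<noteq> 1"
    and alpha: "\<alpha> > 2"
    and l_sv: "slowly_varying l"
    and tail: "\<And>n::nat. n \<ge> 1 \<Longrightarrow> Fbar p (real n) = real n powr (-\<alpha>) * l (real n)"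
    and phi_inv: "((\<lambda>\<epsilon>. Fbar p (\<phi> \<epsilon>) / \<epsilon>) \<longlongrightarrow> 1) (at_right 0)"
    and f_cont: "continuous_on {0..} f"
    and f_nonneg: "\<And>x. x \<ge> 0 \<Longrightarrow> f x \<ge> 0"
    and f_zero: "\<exists>\<delta>>0. \<forall>x. 0 \<le> x \<and> x < \<delta> \<longrightarrow> f x = 0"
    and a_nonneg: "a \<ge> 0"
  shows "((\<lambda>k. real k * Lbar p a f \<phi> k) \<longlongrightarrow>
           sqrt 2 / gw_sigma p *
           sqrt (a + \<alpha> * (LBINT x:{0<..}. (1 - exp (- f x)) * x powr (-\<alpha> - 1)))) sequentially"
proof -
  interpret gw_heavy_tail p \<alpha> l \<phi> f a
    by unfold_locales (use assms in auto)
  show ?thesis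
    using tendsto_k_Lbar unfolding hf_def .
qed

end
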